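(* With the notation below, for every $k\in\mathbb{Z}$ one has $\hat N_{k-1}\subseteq\hat N_k$ and the index $[\hat N_k:\hat N_{k-1}]$ equals $q$.
   Context: Let $F$ be a non-archimedean local field with ring of integers $\mathfrak{o}$, uniformizer $\varpi$, and finite residue field of cardinality $q$. $X=X_{PGL_2(F)}$ is the Bruhat–Tits tree of $PGL_2(F)$: vertices are homothety classes of $\mathfrak{o}$-lattices in $F^2$, with $[L],[L']$ adjacent iff there are representatives with $\varpi L\subsetneq L'\subsetneq L$; it is $(q+1)$-regular. $d$ is the path-length distance; $\mathrm{Aut}(X)$ is the group of distance-preserving bijections of the vertex set with the topology of pointwise convergence, and $PGL_2(F)\hookrightarrow\mathrm{Aut}(X)$ via the linear action on lattices. For an edge $\eta=\{y_1,y_2\}$ and $e\ge1$, $B(\eta,e)=\{y:\min(d(y,y_1),d(y,y_2))\le e\}$, and $\hat G=\hat G^{(e)}=\{g\in\mathrm{Aut}(X):\forall\eta\ \exists g'\in PGL_2(F),\ g|_{B(\eta,e)}=g'|_{B(\eta,e)}\}$ for a fixed $e\ge1$. Ends are equivalence classes of infinite paths (agreeing after an index shift from some point on); $[x,\omega]$ denotes the unique infinite path from vertex $x$ in the class $\omega$. Fix a doubly infinite path $(x_n)_{n\in\mathbb{Z}}$; let $\omega$ be the end of $(x_n)_{n\ge0}$. Set $\hat B=\{g\in\hat G: g(\omega)=\omega\}$, $\hat N=\{b\in\hat B: b(x_i)=x_i\text{ for some }i\in\mathbb{Z}\}$, and for $k\in\mathbb{Z}$, $\hat N_k=\{n\in\hat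 N: n \text{ fixes every vertex of } [x_k,\omega]\}$. *)

theory Defs
  imports Main
begin

text \<open>The valuation v is only meaningful on nonzero elements; its value at 0 is irrelevant.\<close>

definition val_ring :: "('a::field \<Rightarrow> int) \<Rightarrow> 'a set" where
  "val_ring v = {x. x = 0 \<or> 0 \<le> v x}"

definition max_ideal :: "('a::field \<Rightarrow> int) \<Rightarrow> 'a set" where
  "max_ideal v = {x. x = 0 \<or> 0 < v x}"

definition residue_classes :: "('a::field \<Rightarrow> int) \<Rightarrow> 'a set set" where
  "residue_classes v = (\<lambda>x. {y \<in> val_ring v. y - x \<in> max_ideal v}) ` val_ring v"

definition val_complete :: "('a::field \<Rightarrow> int) \<Rightarrow> bool" where
  "val_complete v \<longleftrightarrow>
    (\<forall>s :: nat \<Rightarrow> 'a.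
       (\<forall>N::int. \<exists>M. \<forall>m n. M \<le> m \<longrightarrow> M \<le> n \<longrightarrow> s m = s n \<or> N \<le> v (s m - s n))
       \<longrightarrow> (\<exists>L. \<forall>N::int. \<exists>M. \<forall>n. M \<le> n \<longrightarrow> s n = L \<or> N \<le> v (s n - L)))"

definition nonarch_local_field :: "('a::field \<Rightarrow> int) \<Rightarrow> nat \<Rightarrow> bool" where
  "nonarch_local_field v q \<longleftrightarrow>
     (\<forall>x y. x \<noteq> 0 \<longrightarrow> y \<noteq> 0 \<longrightarrow> v (x * y) = v x + v y) \<and>
     (\<forall>x y. x \<noteq> 0 \<longrightarrow> y \<noteq> 0 \<longrightarrow> x + y \<noteq> 0 \<longrightarrow> min (v x) (v y) \<le> v (x + y)) \<and>
     (\<exists>\<pi>. \<pi> \<noteq> 0 \<and> v \<pi> = 1) \<and>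
     val_complete v \<and>
     finite (residue_classes v) \<and> card (residue_classes v) = q"

definition olattice :: "('a::field \<Rightarrow> int) \<Rightarrow> ('a \<times> 'a) set \<Rightarrow> bool" where
  "olattice v L \<longleftrightarrow> (\<exists>u1 u2 w1 w2. u1 * w2 - u2 * w1 \<noteq> 0 \<and>
      L = {(a * u1 + b * w1, a * u2 + b * w2) | a b. a \<in> val_ring v \<and> b \<in> val_ring v})"

definition scale :: "'a::field \<Rightarrow> ('a \<times> 'a) set \<Rightarrow> ('a \<times> 'a) set" where
  "scale c L = (\<lambda>(x, y). (c * x, c * y)) ` L"

definition hclass :: "('a::field \<Rightarrow> int) \<Rightarrow> ('a \<times> 'a) set \<Rightarrow> ('a \<times> 'a) set set" where
  "hclass v L = {scale c L | c. c \<noteq> 0}"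

definition BT_vertices :: "('a::field \<Rightarrow> int) \<Rightarrow> ('a \<times> 'a) set set set" where
  "BT_vertices v = {hclass v L | L. olattice v L}"

definition BT_adj :: "('a::field \<Rightarrow> int) \<Rightarrow> ('a \<times> 'a) set set \<Rightarrow> ('a \<times> 'a) set set \<Rightarrow> bool" where
  "BT_adj v X Y \<longleftrightarrow> X \<in> BT_vertices v \<and> Y \<in> BT_vertices v \<and>
     (\<exists>L \<in> X. \<exists>L' \<in> Y. \<exists>\<pi>. \<pi> \<noteq> 0 \<and> v \<pi> = 1 \<and> scale \<pi> L \<subset> L' \<and> L' \<subset> L)"

definition BT_dist :: "('a::field \<Rightarrow> int) \<Rightarrow> ('a \<times> 'a) set set \<Rightarrow> ('a \<times> 'a) set set \<Rightarrow> nat" where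
  "BT_dist v X Y = (LEAST n. \<exists>p. p 0 = X \<and> p n = Y \<and> (\<forall>i<n. BT_adj v (p i) (p (Suc i))))"

text \<open>Automorphisms: distance-preserving bijections of the vertex set
  (extended by the identity outside the vertex set, so that they are determined by
  their action on vertices).\<close>
definition BT_aut :: "('a::field \<Rightarrow> int) \<Rightarrow> (('a \<times> 'a) set set \<Rightarrow> ('a \<times> 'a) set set) \<Rightarrow> bool" where
  "BT_aut v g \<longleftrightarrow> bij_betw g (BT_vertices v) (BT_vertices v) \<and>
     (\<forall>X \<in> BT_vertices v. \<forall>Y \<in> BT_vertices v. BT_dist v (g X) (g Y) = BT_dist v X Y) \<and>
     (\<forall>X. X \<notin> BT_vertices v \<longrightarrow> g X = X)"

definition lin_act :: "'a::field \<times> 'a \<times> 'a \<times> 'a \<Rightarrow> 'a \<times> 'a \<Rightarrow> 'a \<times> 'a" where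
  "lin_act M p = (case M of (a, b, c, d) \<Rightarrow> (case p of (x, y) \<Rightarrow> (a * x + b * y, c * x + d * y)))"

definition mat_vact :: "'a::field \<times> 'a \<times> 'a \<times> 'a \<Rightarrow> ('a \<times> 'a) set set \<Rightarrow> ('a \<times> 'a) set set" where
  "mat_vact M X = (\<lambda>L. lin_act M ` L) ` X"

definition invertible_mat :: "'a::field \<times> 'a \<times> 'a \<times> 'a \<Rightarrow> bool" where
  "invertible_mat M \<longleftrightarrow> (case M of (a, b, c, d) \<Rightarrow> a * d - b * c \<noteq> 0)"

definition edge_ball :: "('a::field \<Rightarrow> int) \<Rightarrow> ('a \<times> 'a) set set \<Rightarrow> ('a \<times> 'a) set set \<Rightarrow> nat \<Rightarrow> ('a \<times> 'a) set set set" where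
  "edge_ball v y1 y2 e = {y \<in> BT_vertices v. min (BT_dist v y y1) (BT_dist v y y2) \<le> e}"

definition G_hat :: "('a::field \<Rightarrow> int) \<Rightarrow> nat \<Rightarrow> (('a \<times> 'a) set set \<Rightarrow> ('a \<times> 'a) set set) set" where
  "G_hat v e = {g. BT_aut v g \<and>
     (\<forall>y1 y2. BT_adj v y1 y2 \<longrightarrow>
        (\<exists>M. invertible_mat M \<and> (\<forall>y \<in> edge_ball v y1 y2 e. g y = mat_vact M y)))}"

definition BT_ray :: "('a::field \<Rightarrow> int) \<Rightarrow> (nat \<Rightarrow> ('a \<times> 'a) set set) \<Rightarrow> bool" where
  "BT_ray v p \<longleftrightarrow> (\<forall>i. p i \<in> BT_vertices v) \<and>
     (\<forall>i j. BT_dist v (p i) (p j) = nat \<bar>int i - int j\<bar>)"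

definition ray_equiv :: "(nat \<Rightarrow> 'b) \<Rightarrow> (nat \<Rightarrow> 'b) \<Rightarrow> bool" where
  "ray_equiv p r \<longleftrightarrow> (\<exists>a b. \<forall>n. p (n + a) = r (n + b))"

definition BT_biinf_path :: "('a::field \<Rightarrow> int) \<Rightarrow> (int \<Rightarrow> ('a \<times> 'a) set set) \<Rightarrow> bool" where
  "BT_biinf_path v x \<longleftrightarrow> (\<forall>i. x i \<in> BT_vertices v) \<and>
     (\<forall>i j. BT_dist v (x i) (x j) = nat \<bar>i - j\<bar>)"

text \<open>The ray (x_n)_{n>=0}, representing the end omega.\<close>
definition pos_ray :: "(int \<Rightarrow> 'b) \<Rightarrow> nat \<Rightarrow> 'b" where
  "pos_ray x n = x (int n)"

definition B_hat :: "('a::field \<Rightarrow> int) \<Rightarrow> nat \<Rightarrow> (int \<Rightarrow> ('a \<times> 'a) set set)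
    \<Rightarrow> (('a \<times> 'a) set set \<Rightarrow> ('a \<times> 'a) set set) set" where
  "B_hat v e x = {g \<in> G_hat v e. ray_equiv (g \<circ> pos_ray x) (pos_ray x)}"

definition N_hat :: "('a::field \<Rightarrow> int) \<Rightarrow> nat \<Rightarrow> (int \<Rightarrow> ('a \<times> 'a) set set)
    \<Rightarrow> (('a \<times> 'a) set set \<Rightarrow> ('a \<times> 'a) set set) set" where
  "N_hat v e x = {b \<in> B_hat v e x. \<exists>i. b (x i) = x i}"

definition N_hat_k :: "('a::field \<Rightarrow> int) \<Rightarrow> nat \<Rightarrow> (int \<Rightarrow> ('a \<times> 'a) set set) \<Rightarrow> int
    \<Rightarrow> (('a \<times> 'a) set set \<Rightarrow> ('a \<times> 'a) set set) set" where
  "N_hat_k v e x k = {n \<in> N_hat v e x. \<forall>p. BT_ray v p \<and> p 0 = x k \<and> ray_equiv p (pos_ray x)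
       \<longrightarrow> (\<forall>i. n (p i) = p i)}"

text \<open>Index [H : K]: number of left cosets g K (g in H), group law = composition.\<close>
definition coset_index :: "('b \<Rightarrow> 'b) set \<Rightarrow> ('b \<Rightarrow> 'b) set \<Rightarrow> nat" where
  "coset_index H K = card ((\<lambda>g. (\<lambda>h. g \<circ> h) ` K) ` H)"

end

theory Submission
  imports Defs
begin

text \<open>Vertices are homothety classes of $\mathfrak{o}$-lattices, and by the elementary divisor
  theorem the path distance between $[L]$ and $[L']$ is the $n$ for which, after rescaling $L'$,
  the two lattices have bases $(u, w)$ and $(u, \varpi^n w)$. Consequently a geodesic ray from
  $x_k$ has the form $[\langle u, \varpi^n e\rangle]$, where completeness of $F$ supplies the limit
  vector $u$, and an automorphism fixing $x_j$ for all $j \ge k$ fixes every ray from $x_k$ into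
  $\omega$. So $\hat N_k$ is the pointwise stabiliser of $\{x_j\}_{j \ge k}$ in $\hat G$,
  $\hat N_{k-1} \subseteq \hat N_k$, and two elements of $\hat N_k$ lie in the same coset of
  $\hat N_{k-1}$ iff they agree at $x_{k-1}$. The index is therefore the size of the orbit of
  $x_{k-1}$: the neighbours of $x_k$ other than $x_{k+1}$ are the classes of
  $\langle a u + e, \varpi u\rangle$ for $a \in \mathfrak{o}/\varpi$, and the transvections
  $z \mapsto z + t \det(u, z)\, u$ with $t \in \mathfrak{o}$ fix the ray and permute them
  transitively.\<close>

definition smul :: "'a::field \<Rightarrow> 'a \<times> 'a \<Rightarrow> 'a \<times> 'a" where
  "smul c z = (c * fst z, c * snd z)"
definition vadd :: "'a::field \<times> 'a \<Rightarrow> 'a \<times> 'a \<Rightarrow> 'a \<times> 'a" where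
  "vadd z z' = (fst z + fst z', snd z + snd z')"
definition det2 :: "'a::field \<times> 'a \<Rightarrow> 'a \<times> 'a \<Rightarrow> 'a" where
  "det2 u w = fst u * snd w - snd u * fst w"

lemma det2_simps[simp]:
  "det2 (vadd a b) w = det2 a w + det2 b w"
  "det2 w (vadd a b) = det2 w a + det2 w b"
  "det2 (smul c a) w = c * det2 a w"
  "det2 w (smul c a) = c * det2 w a"
  "det2 a a = 0"
  by (auto simp: det2_def vadd_def smul_def algebra_simps)

lemma det2_swap: "det2 w u = - det2 u w" by (simp add: det2_def algebra_simps)

lemma vec_decomp:
  assumes "det2 u w \<noteq> 0"
  shows "z = vadd (smul (det2 z w / det2 u w) u) (smul (det2 u z / det2 u w) w)"
proof -
  obtain z1 z2 u1 u2 w1 w2 where e: "z = (z1,z2)" "u = (u1,u2)" "w = (w1,w2)" by (cases z, cases u, cases w) auto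
  let ?D = "u1 * w2 - u2 * w1"
  have D: "?D \<noteq> 0" using assms e by (simp add: det2_def)
  have "(z1 * w2 - z2 * w1) * u1 + (u1 * z2 - u2 * z1) * w1 = z1 * ?D"
       "(z1 * w2 - z2 * w1) * u2 + (u1 * z2 - u2 * z1) * w2 = z2 * ?D" by (simp_all add: algebra_simps)
  hence "(z1 * w2 - z2 * w1) / ?D * u1 + (u1 * z2 - u2 * z1) / ?D * w1 = z1"
        "(z1 * w2 - z2 * w1) / ?D * u2 + (u1 * z2 - u2 * z1) / ?D * w2 = z2"
    using D by (simp_all add: divide_simps)
  thus ?thesis using e by (simp add: det2_def vadd_def smul_def)
qed

lemma coord_unique:
  assumes "det2 u w \<noteq> 0" "z = vadd (smul a u) (smul b w)"
  shows "a = det2 z w / det2 u w" "b = det2 u z / det2 u w"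
  using assms by (auto simp: field_simps)

lemma vadd_smul_simps[simp]:
  "vadd (smul a z) (smul b z) = smul (a + b) z"
  "smul a (smul b z) = smul (a * b) z"
  "smul 1 z = z"
  "smul 0 z = (0,0)"
  "smul a (vadd z z') = vadd (smul a z) (smul a z')"
  by (auto simp: vadd_def smul_def algebra_simps)

lemma vadd_commute: "vadd a b = vadd b a"
  by (auto simp: vadd_def algebra_simps)

lemma vadd_zero[simp]: "vadd z (0,0) = z" "vadd (0,0) z = z" by (auto simp: vadd_def)

lemma smul_comb: "smul c (vadd (smul a u) (smul b w)) = vadd (smul a (smul c u)) (smul b (smul c w))"
  by (auto simp: smul_def vadd_def algebra_simps)

lemma vadd_smul_shift: "vadd e1 (smul a e2) = vadd (vadd e1 (smul b e2)) (smul (a - b) e2)"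
  by (simp add: vadd_def smul_def algebra_simps)

lemma scale_eq_smul_image: "scale c L = smul c ` L"
  unfolding scale_def smul_def by (auto simp: case_prod_beta)

lemma scale_scale: "scale (c::'a::field) (scale d L) = scale (c * d) L"
  unfolding scale_eq_smul_image by (auto simp: image_image)

lemma scale_one[simp]: "scale (1::'a::field) L = L"
  unfolding scale_eq_smul_image by simp

lemma scale_mono: "L \<subseteq> L' \<Longrightarrow> scale (c::'a::field) L \<subseteq> scale c L'"
  unfolding scale_eq_smul_image by auto

definition mdet :: "'a::field \<times> 'a \<times> 'a \<times> 'a \<Rightarrow> 'a" where
  "mdet M = (case M of (a, b, c, d) \<Rightarrow> a * d - b * c)"

definition minv :: "'a::field \<times> 'a \<times> 'a \<times> 'a \<Rightarrow> 'a \<times> 'a \<times> 'a \<times> 'a" where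
  "minv M = (case M of (a, b, c, d) \<Rightarrow> (d / mdet M, - b / mdet M, - c / mdet M, a / mdet M))"

definition mmul :: "'a::field \<times> 'a \<times> 'a \<times> 'a \<Rightarrow> 'a \<times> 'a \<times> 'a \<times> 'a \<Rightarrow> 'a \<times> 'a \<times> 'a \<times> 'a" where
  "mmul M N = (case M of (a, b, c, d) \<Rightarrow> case N of (a', b', c', d') \<Rightarrow>
      (a * a' + b * c', a * b' + b * d', c * a' + d * c', c * b' + d * d'))"

lemma invertible_mdet: "invertible_mat M \<longleftrightarrow> mdet M \<noteq> 0"
  unfolding invertible_mat_def mdet_def by (cases M) auto

lemma lin_mmul: "lin_act (mmul M N) z = lin_act M (lin_act N z)"
  unfolding lin_act_def mmul_def by (cases M; cases N; cases z) (simp add: algebra_simps)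

lemma mdet_mmul: "mdet (mmul M N) = mdet M * mdet N"
  unfolding mdet_def mmul_def by (cases M; cases N) (simp add: algebra_simps)

lemma lin_act_minv: "mdet M \<noteq> 0 \<Longrightarrow> lin_act (minv M) (lin_act M z) = z"
  by (cases M; cases z; simp add: minv_def lin_act_def mdet_def divide_simps; simp add: algebra_simps)

lemma lin_act_minv_right: "mdet M \<noteq> 0 \<Longrightarrow> lin_act M (lin_act (minv M) z) = z"
  by (cases M; cases z; simp add: minv_def lin_act_def mdet_def divide_simps; simp add: algebra_simps)

lemma mdet_minv_nonzero: "mdet M \<noteq> 0 \<Longrightarrow> mdet (minv M) \<noteq> 0"
  by (cases M) (simp add: minv_def mdet_def divide_simps, simp add: mult.commute)

lemma mat_vact_comp: "mat_vact M (mat_vact N X) = mat_vact (mmul M N) X"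
  unfolding mat_vact_def by (simp add: image_image lin_mmul[symmetric] image_comp comp_def)

lemma mat_vact_minv: "mdet M \<noteq> 0 \<Longrightarrow> mat_vact (minv M) (mat_vact M X) = X"
  unfolding mat_vact_def by (simp add: image_image lin_act_minv)

lemma mat_vact_minv_right: "mdet M \<noteq> 0 \<Longrightarrow> mat_vact M (mat_vact (minv M) X) = X"
  unfolding mat_vact_def by (simp add: image_image lin_act_minv_right)

lemma lin_act_vadd: "lin_act M (vadd z z') = vadd (lin_act M z) (lin_act M z')"
  unfolding lin_act_def vadd_def by (cases M; cases z; cases z') (simp add: algebra_simps)

lemma lin_act_smul: "lin_act M (smul c z) = smul c (lin_act M z)"
  unfolding lin_act_def smul_def by (cases M; cases z) (simp add: algebra_simps)

lemma det2_lin_act: "det2 (lin_act M u) (lin_act M w) = mdet M * det2 u w"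
  unfolding lin_act_def det2_def mdet_def by (cases M; cases u; cases w) (simp add: algebra_simps)

lemma lin_act_scale: "lin_act M ` scale (c::'a::field) L = scale c (lin_act M ` L)"
  unfolding scale_eq_smul_image image_image lin_act_smul by simp

definition transvection :: "'a::field \<times> 'a \<Rightarrow> 'a \<Rightarrow> 'a \<times> 'a \<times> 'a \<times> 'a" where
  "transvection u c = (1 - c * fst u * snd u, c * fst u * fst u, - c * snd u * snd u, 1 + c * fst u * snd u)"

lemma mdet_transvection: "mdet (transvection u c) = 1"
  unfolding transvection_def mdet_def by (simp add: algebra_simps power2_eq_square)

lemma lin_act_transvection: "lin_act (transvection u c) z = vadd z (smul (c * det2 u z) u)"
  unfolding transvection_def lin_act_def vadd_def smul_def det2_def by (cases u; cases z) (simp add: algebra_simps)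

lemma card_image_eq_if_same_fibres:
  assumes eq: "\<forall>a\<in>A. \<forall>b\<in>A. f a = f b \<longleftrightarrow> g a = g b"
  shows "card (f ` A) = card (g ` A)"
proof -
  define phi where "phi z = g (SOME a. a \<in> A \<and> f a = z)" for z
  have phif: "phi (f a) = g a" if "a \<in> A" for a
  proof -
    have "\<exists>a'. a' \<in> A \<and> f a' = f a" using that by blast
    hence "(SOME a'. a' \<in> A \<and> f a' = f a) \<in> A \<and> f (SOME a'. a' \<in> A \<and> f a' = f a) = f a" by (rule someI_ex)
    thus ?thesis unfolding phi_def using eq that by blast
  qed
  have "inj_on phi (f ` A)"
  proof (rule inj_onI)
    fix z z' assume "z \<in> f ` A" "z' \<in> f ` A" "phi z = phi z'"
    then obtain a a' where "a \<in> A" "a' \<in> A" "z = f a" "z' = f a'" "phi z = phi z'" by blast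
    thus "z = z'" using phif eq by metis
  qed
  moreover have "phi ` (f ` A) = g ` A" using phif by (auto simp: image_image)
  ultimately show ?thesis using card_image by metis
qed

locale discrete_valuation =
  fixes v :: "'a::field \<Rightarrow> int"
  assumes val_mult: "x \<noteq> 0 \<Longrightarrow> y \<noteq> 0 \<Longrightarrow> v (x * y) = v x + v y"
  and val_ultrametric: "x \<noteq> 0 \<Longrightarrow> y \<noteq> 0 \<Longrightarrow> x + y \<noteq> 0 \<Longrightarrow> min (v x) (v y) \<le> v (x + y)"
  and unif_exists: "\<exists>p. p \<noteq> 0 \<and> v p = 1"
begin

definition unif :: 'a where "unif = (SOME p. p \<noteq> 0 \<and> v p = 1)"

lemma unif_nonzero [simp]: "unif \<noteq> 0" and val_unif [simp]: "v unif = 1"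
  using someI_ex[OF unif_exists] unfolding unif_def by auto

definition val_ge :: "int \<Rightarrow> 'a \<Rightarrow> bool" where
  "val_ge n x \<longleftrightarrow> x = 0 \<or> n \<le> v x"

abbreviation integral :: "'a \<Rightarrow> bool" where "integral x \<equiv> val_ge 0 x"

lemma val_one[simp]: "v 1 = 0"
  using val_mult[of 1 1] by simp

lemma val_inverse: "x \<noteq> 0 \<Longrightarrow> v (inverse x) = - v x"
  using val_mult[of x "inverse x"] by simp

lemma val_divide: "x \<noteq> 0 \<Longrightarrow> y \<noteq> 0 \<Longrightarrow> v (x / y) = v x - v y"
  by (simp add: divide_inverse val_mult val_inverse)

lemma val_minus_one[simp]: "v (-1) = 0"
  using val_mult[of "-1" "-1"] by simp

lemma val_uminus[simp]: "v (- x) = v x"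
proof (cases "x = 0")
  case False thus ?thesis using val_mult[of "-1" x] by simp
qed simp

lemma val_power: "x \<noteq> 0 \<Longrightarrow> v (x ^ n) = int n * v x"
  by (induction n) (auto simp: val_mult algebra_simps)

lemma val_unif_power[simp]: "v (unif ^ n) = int n"
  using val_power[OF unif_nonzero] val_unif by simp

lemma unif_power_nonzero[simp]: "unif ^ n \<noteq> 0" using unif_nonzero by simp

lemma val_ge_zero[simp]: "val_ge n 0" by (simp add: val_ge_def)

lemma val_ge_add: "val_ge n x \<Longrightarrow> val_ge n y \<Longrightarrow> val_ge n (x + y)"
  unfolding val_ge_def using val_ultrametric[of x y] by (cases "x = 0"; cases "y = 0"; cases "x + y = 0") auto

lemma val_ge_uminus[simp]: "val_ge n (- x) = val_ge n x" by (simp add: val_ge_def)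

lemma val_ge_diff: "val_ge n x \<Longrightarrow> val_ge n y \<Longrightarrow> val_ge n (x - y)"
  using val_ge_add[of n x "-y"] by simp

lemma val_ge_mult: "val_ge n x \<Longrightarrow> val_ge m y \<Longrightarrow> val_ge (n + m) (x * y)"
  unfolding val_ge_def by (cases "y = 0"; cases "x = 0") (auto simp: val_mult)

lemma integral_one[simp]: "integral 1" by (simp add: val_ge_def)

lemma integral_mult: "integral x \<Longrightarrow> integral y \<Longrightarrow> integral (x * y)"
  using val_ge_mult[of 0 x 0 y] by simp

lemma integral_unif_power[simp]: "integral (unif ^ n)" by (simp add: val_ge_def)

lemma integral_divide_unif_power: "integral (x / unif ^ n) \<longleftrightarrow> val_ge (int n) x"
  by (cases "x = 0") (auto simp: val_ge_def val_divide)

lemma integral_divide_unif: "integral (x / unif) \<longleftrightarrow> val_ge 1 x"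
  using integral_divide_unif_power[of x 1] by simp

lemma integral_inverse_unit: "x \<noteq> 0 \<Longrightarrow> v x = 0 \<Longrightarrow> integral (inverse x)"
  by (simp add: val_ge_def val_inverse)

lemma integral_unit: "x \<noteq> 0 \<Longrightarrow> v x = 0 \<Longrightarrow> integral x" by (simp add: val_ge_def)

lemma exists_min_val: "\<exists>x\<in>set xs. x \<noteq> 0 \<Longrightarrow> \<exists>t\<in>set xs. t \<noteq> 0 \<and> (\<forall>x\<in>set xs. val_ge (v t) x)"
proof (induction xs)
  case Nil thus ?case by simp
next
  case (Cons y xs)
  show ?case
  proof (cases "\<exists>x\<in>set xs. x \<noteq> 0")
    case False
    hence "y \<noteq> 0" using Cons.prems by auto
    thus ?thesis using False by (auto simp: val_ge_def)
  next
    case True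
    then obtain t where t: "t \<in> set xs" "t \<noteq> 0" "\<forall>x\<in>set xs. val_ge (v t) x" using Cons.IH by blast
    thus ?thesis by (cases "y \<noteq> 0 \<and> v y < v t") (auto simp: val_ge_def)
  qed
qed

lemma val_complete_limit:
  assumes "val_complete v" and cauchy: "\<And>n m. n \<le> m \<Longrightarrow> val_ge (int n) (s m - s n)"
  shows "\<exists>l. \<forall>n. val_ge (int n) (l - s n)"
proof -
  have "\<exists>M. \<forall>m n. M \<le> m \<longrightarrow> M \<le> n \<longrightarrow> s m = s n \<or> N \<le> v (s m - s n)" for N :: int
  proof (intro exI allI impI)
    fix m n assume "nat N \<le> m" "nat N \<le> n"
    moreover have "val_ge (int (min m n)) (s m - s n)"
      using cauchy[of n m] cauchy[of m n] val_ge_uminus[of _ "s n - s m"] by (cases "n \<le> m") auto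
    ultimately show "s m = s n \<or> N \<le> v (s m - s n)" by (auto simp: val_ge_def)
  qed
  then obtain l where l: "\<forall>N::int. \<exists>M. \<forall>n. M \<le> n \<longrightarrow> s n = l \<or> N \<le> v (s n - l)"
    using assms(1) unfolding val_complete_def by blast
  have "val_ge (int n) (l - s n)" for n
  proof -
    obtain M where M: "\<forall>k. M \<le> k \<longrightarrow> s k = l \<or> int n \<le> v (s k - l)" using l by blast
    have "val_ge (int n) (s (max M n) - l)" using M by (auto simp: val_ge_def)
    moreover have "val_ge (int n) (s (max M n) - s n)" using cauchy by simp
    ultimately have "val_ge (int n) (- (s (max M n) - l) + (s (max M n) - s n))"
      by (intro val_ge_add) (simp_all only: val_ge_uminus)
    thus ?thesis by (simp add: algebra_simps)
  qed
  thus ?thesis by blast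
qed

definition lat :: "'a \<times> 'a \<Rightarrow> 'a \<times> 'a \<Rightarrow> ('a \<times> 'a) set" where
  "lat u w = {vadd (smul a u) (smul b w) | a b. integral a \<and> integral b}"

lemma mem_lat:
  assumes "det2 u w \<noteq> 0"
  shows "z \<in> lat u w \<longleftrightarrow> integral (det2 z w / det2 u w) \<and> integral (det2 u z / det2 u w)"
proof
  assume "z \<in> lat u w"
  then obtain a b where "integral a" "integral b" "z = vadd (smul a u) (smul b w)" unfolding lat_def by auto
  thus "integral (det2 z w / det2 u w) \<and> integral (det2 u z / det2 u w)"
    using coord_unique[OF assms] by metis
next
  assume "integral (det2 z w / det2 u w) \<and> integral (det2 u z / det2 u w)"
  thus "z \<in> lat u w" unfolding lat_def using vec_decomp[OF assms, of z] by blast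
qed

lemma lat_vadd_closed: "z \<in> lat u w \<Longrightarrow> z' \<in> lat u w \<Longrightarrow> vadd z z' \<in> lat u w"
proof -
  assume "z \<in> lat u w" "z' \<in> lat u w"
  then obtain a b a' b' where "integral a" "integral b" "integral a'" "integral b'"
    "z = vadd (smul a u) (smul b w)" "z' = vadd (smul a' u) (smul b' w)"
    unfolding lat_def by auto
  moreover hence "vadd z z' = vadd (smul (a+a') u) (smul (b+b') w)" by (auto simp: vadd_def smul_def algebra_simps)
  ultimately show ?thesis unfolding lat_def using val_ge_add by fastforce
qed

lemma lat_smul_closed: "z \<in> lat u w \<Longrightarrow> integral c \<Longrightarrow> smul c z \<in> lat u w"
proof -
  assume "z \<in> lat u w" "integral c"
  then obtain a b where "integral a" "integral b" "z = vadd (smul a u) (smul b w)"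
    unfolding lat_def by auto
  moreover hence "smul c z = vadd (smul (c*a) u) (smul (c*b) w)" by (auto simp: vadd_def smul_def algebra_simps)
  ultimately show ?thesis unfolding lat_def using integral_mult \<open>integral c\<close> by fastforce
qed

lemma lat_basis_mem: "u \<in> lat u w" "w \<in> lat u w"
  unfolding lat_def
  by (rule CollectI, rule exI[of _ 1], rule exI[of _ 0], simp add: vadd_def smul_def)
     (rule CollectI, rule exI[of _ 0], rule exI[of _ 1], simp add: vadd_def smul_def)

lemma lat_subset: "u' \<in> lat u w \<Longrightarrow> w' \<in> lat u w \<Longrightarrow> lat u' w' \<subseteq> lat u w"
  unfolding lat_def[of u' w'] using lat_vadd_closed lat_smul_closed by blast

lemma lat_subset_iff: "lat u' w' \<subseteq> lat u w \<longleftrightarrow> u' \<in> lat u w \<and> w' \<in> lat u w"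
  using lat_subset lat_basis_mem by blast

lemma mem_lat_comb:
  assumes "det2 u w \<noteq> 0"
  shows "vadd (smul a u) (smul b w) \<in> lat u w \<longleftrightarrow> integral a \<and> integral b"
  using mem_lat[OF assms] coord_unique[OF assms refl] by metis

lemma scale_lat: "scale c (lat u w) = lat (smul c u) (smul c w)"
proof (intro set_eqI iffI)
  fix z assume "z \<in> scale c (lat u w)"
  then obtain a b where "integral a" "integral b" "z = smul c (vadd (smul a u) (smul b w))"
    unfolding scale_eq_smul_image lat_def by blast
  thus "z \<in> lat (smul c u) (smul c w)" unfolding smul_comb lat_def by blast
next
  fix z assume "z \<in> lat (smul c u) (smul c w)"
  then obtain a b where "integral a" "integral b" "z = vadd (smul a (smul c u)) (smul b (smul c w))"
    unfolding lat_def by blast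
  hence "z = smul c (vadd (smul a u) (smul b w))" "vadd (smul a u) (smul b w) \<in> lat u w" 
    unfolding smul_comb lat_def by blast+
  thus "z \<in> scale c (lat u w)" unfolding scale_eq_smul_image by blast
qed

lemma lat_swap: "lat w u = lat u w"
proof (intro set_eqI iffI)
  fix z assume "z \<in> lat w u"
  then obtain a b where "integral a" "integral b" "z = vadd (smul a w) (smul b u)" unfolding lat_def by blast
  hence "integral b \<and> integral a \<and> z = vadd (smul b u) (smul a w)" by (simp add: vadd_commute)
  thus "z \<in> lat u w" unfolding lat_def by blast
next
  fix z assume "z \<in> lat u w"
  then obtain a b where "integral a" "integral b" "z = vadd (smul a u) (smul b w)" unfolding lat_def by blast
  hence "integral b \<and> integral a \<and> z = vadd (smul b w) (smul a u)" by (simp add: vadd_commute)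
  thus "z \<in> lat w u" unfolding lat_def by blast
qed

lemma lat_smul_fst: "integral a \<Longrightarrow> smul a u \<in> lat u w" using lat_smul_closed[OF lat_basis_mem(1)] .

lemma lat_smul_snd: "integral a \<Longrightarrow> smul a w \<in> lat u w" using lat_smul_closed[OF lat_basis_mem(2)] .

lemma lat_eq_if_val_det_eq:
  assumes D: "det2 u w \<noteq> 0" and sub: "lat u' w' \<subseteq> lat u w" and D': "det2 u' w' \<noteq> 0"
    and vd: "v (det2 u' w') = v (det2 u w)"
  shows "lat u' w' = lat u w"
proof -
  have "u' \<in> lat u w" "w' \<in> lat u w" using sub lat_subset_iff by blast+
  then obtain a b c d where oo: "integral a" "integral b" "integral c" "integral d" and eu: "u' = vadd (smul a u) (smul b w)"
    and ew: "w' = vadd (smul c u) (smul d w)" unfolding lat_def by blast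
  define e where "e = a * d - b * c"
  have de: "det2 u' w' = e * det2 u w" unfolding eu ew e_def
    by (simp add: det2_swap[of w u] algebra_simps)
  have enz: "e \<noteq> 0" using D' de by auto
  have ve: "v e = 0" using vd D D' de enz by (simp add: val_mult)
  have ie: "integral (inverse e)" using integral_inverse_unit[OF enz ve] .
  obtain u1 u2 w1 w2 where uw: "u = (u1,u2)" "w = (w1,w2)" by (cases u, cases w) auto
  have i1: "e * u1 = d * (a * u1 + b * w1) - b * (c * u1 + d * w1)"
     "e * u2 = d * (a * u2 + b * w2) - b * (c * u2 + d * w2)"
     "e * w1 = a * (c * u1 + d * w1) - c * (a * u1 + b * w1)"
     "e * w2 = a * (c * u2 + d * w2) - c * (a * u2 + b * w2)"
    by (simp_all add: e_def algebra_simps)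
  have "u1 = d / e * (a * u1 + b * w1) + - b / e * (c * u1 + d * w1)"
     "u2 = d / e * (a * u2 + b * w2) + - b / e * (c * u2 + d * w2)"
     "w1 = - c / e * (a * u1 + b * w1) + a / e * (c * u1 + d * w1)"
     "w2 = - c / e * (a * u2 + b * w2) + a / e * (c * u2 + d * w2)"
    using i1 enz by (simp_all add: divide_simps, simp_all add: algebra_simps)
  hence "u = vadd (smul (d / e) u') (smul (- b / e) w')" "w = vadd (smul (- c / e) u') (smul (a / e) w')"
    unfolding eu ew uw by (simp_all add: vadd_def smul_def)
  moreover have "integral (d / e)" "integral (- b / e)" "integral (- c / e)" "integral (a / e)"
    using integral_mult[OF _ ie] oo by (auto simp: divide_inverse)
  ultimately have "u \<in> lat u' w'" "w \<in> lat u' w'" using mem_lat_comb[OF D'] by metis+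
  thus ?thesis using sub lat_subset by blast
qed

lemma lat_unit_fst: "v e = 0 \<Longrightarrow> e \<noteq> 0 \<Longrightarrow> det2 u w \<noteq> 0 \<Longrightarrow> lat (smul e u) w = lat u w"
proof -
  assume a: "v e = 0" "e \<noteq> 0" "det2 u w \<noteq> 0"
  have sub: "lat (smul e u) w \<subseteq> lat u w"
    by (rule lat_subset[OF lat_smul_fst lat_basis_mem(2)]) (rule integral_unit[OF a(2,1)])
  have d: "det2 (smul e u) w = e * det2 u w" by simp
  show ?thesis
    by (rule lat_eq_if_val_det_eq[OF a(3) sub]) (simp_all only: d, simp add: a, simp add: val_mult a)
qed

lemma lat_shear_fst: "integral b \<Longrightarrow> det2 u w \<noteq> 0 \<Longrightarrow> lat (vadd u (smul b w)) w = lat u w"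
proof -
  assume a: "integral b" "det2 u w \<noteq> 0"
  have sub: "lat (vadd u (smul b w)) w \<subseteq> lat u w"
    by (rule lat_subset[OF lat_vadd_closed[OF lat_basis_mem(1) lat_smul_snd[OF a(1)]] lat_basis_mem(2)])
  have d: "det2 (vadd u (smul b w)) w = det2 u w" by simp
  show ?thesis
    by (rule lat_eq_if_val_det_eq[OF a(2) sub]) (simp_all only: d a, simp)
qed

lemma lat_unit_snd: "v e = 0 \<Longrightarrow> e \<noteq> 0 \<Longrightarrow> det2 u w \<noteq> 0 \<Longrightarrow> lat u (smul e w) = lat u w"
proof -
  assume a: "v e = 0" "e \<noteq> 0" "det2 u w \<noteq> 0"
  have "det2 w u \<noteq> 0" using a(3) det2_swap[of w u] by simp
  hence "lat (smul e w) u = lat w u" using lat_unit_fst[OF a(1,2)] by blast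
  thus ?thesis using lat_swap[of u "smul e w"] lat_swap[of u w] by simp
qed

lemma lat_shear_snd: "integral b \<Longrightarrow> det2 u w \<noteq> 0 \<Longrightarrow> lat u (vadd w (smul b u)) = lat u w"
proof -
  assume a: "integral b" "det2 u w \<noteq> 0"
  have "det2 w u \<noteq> 0" using a(2) det2_swap[of w u] by simp
  hence h: "lat (vadd w (smul b u)) u = lat w u" using lat_shear_fst[OF a(1)] by blast
  have "lat u (vadd w (smul b u)) = lat (vadd w (smul b u)) u" by (rule lat_swap)
  also have "\<dots> = lat w u" by (rule h)
  also have "\<dots> = lat u w" by (rule lat_swap)
  finally show ?thesis .
qed

lemma scale_unit_lat: "v c = 0 \<Longrightarrow> c \<noteq> 0 \<Longrightarrow> det2 u w \<noteq> 0 \<Longrightarrow> scale c (lat u w) = lat u w"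
proof -
  assume a: "v c = 0" "c \<noteq> 0" "det2 u w \<noteq> 0"
  have "lat (smul c u) (smul c w) = lat u (smul c w)" using a by (intro lat_unit_fst) auto
  also have "\<dots> = lat u w" using a by (intro lat_unit_snd) auto
  finally show ?thesis unfolding scale_lat .
qed

lemma scale_integral_subset: "integral c \<Longrightarrow> det2 u w \<noteq> 0 \<Longrightarrow> scale c (lat u w) \<subseteq> lat u w"
  unfolding scale_lat by (intro lat_subset lat_smul_fst lat_smul_snd)

lemma scale_subset_scale: "(c::'a::field) \<noteq> 0 \<Longrightarrow> d \<noteq> 0 \<Longrightarrow> v d \<le> v c \<Longrightarrow> det2 u w \<noteq> 0 \<Longrightarrow> scale c (lat u w) \<subseteq> scale d (lat u w)"
proof -
  assume a: "c \<noteq> 0" "d \<noteq> 0" "v d \<le> v c" "det2 u w \<noteq> 0"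
  have "integral (c / d)" using a by (simp add: val_ge_def val_divide)
  hence "scale d (scale (c/d) (lat u w)) \<subseteq> scale d (lat u w)" by (rule scale_mono[OF scale_integral_subset[OF _ a(4)]])
  thus ?thesis using a by (simp add: scale_scale)
qed

lemma val_det_le_if_subset:
  assumes D: "det2 u w \<noteq> 0" and sub: "lat u' w' \<subseteq> lat u w" and D': "det2 u' w' \<noteq> 0"
  shows "v (det2 u w) \<le> v (det2 u' w')"
proof -
  have "u' \<in> lat u w" "w' \<in> lat u w" using sub lat_subset_iff by blast+
  then obtain a b c d where oo: "integral a" "integral b" "integral c" "integral d" and eu: "u' = vadd (smul a u) (smul b w)"
    and ew: "w' = vadd (smul c u) (smul d w)" unfolding lat_def by blast
  define e where "e = a * d - b * c"
  have de: "det2 u' w' = e * det2 u w" unfolding eu ew e_def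
    by (simp add: det2_swap[of w u] algebra_simps)
  have eo: "integral e" unfolding e_def using oo by (intro val_ge_diff) (auto intro: integral_mult)
  have "e \<noteq> 0" using de D' by auto
  thus ?thesis using de eo D by (simp add: val_mult val_ge_def)
qed

lemma val_det_eq_if_lat_eq:
  assumes "det2 u w \<noteq> 0" "det2 u' w' \<noteq> 0" "lat u w = lat u' w'"
  shows "v (det2 u w) = v (det2 u' w')"
  using val_det_le_if_subset[OF assms(1) _ assms(2)] val_det_le_if_subset[OF assms(2) _ assms(1)] assms(3) by fastforce

lemma lat_unif_power_Suc_subset: "lat a (smul (unif ^ Suc n) b) \<subseteq> lat a (smul (unif ^ n) b)"
proof -
  have h: "smul unif (smul (unif ^ n) b) \<in> lat a (smul (unif ^ n) b)" by (rule lat_smul_closed[OF lat_basis_mem(2)]) (simp add: val_ge_def)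
  have "smul (unif ^ Suc n) b \<in> lat a (smul (unif ^ n) b)" using h by simp
  thus ?thesis by (rule lat_subset[OF lat_basis_mem(1)])
qed

lemma lin_act_lat: "lin_act M ` lat u w = lat (lin_act M u) (lin_act M w)"
proof (intro set_eqI iffI)
  fix z assume "z \<in> lin_act M ` lat u w"
  then obtain a b where "integral a" "integral b" "z = lin_act M (vadd (smul a u) (smul b w))" unfolding lat_def by blast
  thus "z \<in> lat (lin_act M u) (lin_act M w)" unfolding lat_def lin_act_vadd lin_act_smul by blast
next
  fix z assume "z \<in> lat (lin_act M u) (lin_act M w)"
  then obtain a b where "integral a" "integral b" "z = vadd (smul a (lin_act M u)) (smul b (lin_act M w))" unfolding lat_def by blast
  hence "z = lin_act M (vadd (smul a u) (smul b w))" "vadd (smul a u) (smul b w) \<in> lat u w"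
    unfolding lat_def lin_act_vadd lin_act_smul by blast+
  thus "z \<in> lin_act M ` lat u w" by blast
qed

section \<open>Relative position and elementary divisors\<close>

text \<open>Then $[L]$ and $[L']$ are at distance $n$ in the tree.\<close>
definition rel_pos :: "('a \<times> 'a) set \<Rightarrow> ('a \<times> 'a) set \<Rightarrow> nat \<Rightarrow> bool" where
  "rel_pos L L' n \<longleftrightarrow> (\<exists>u w. det2 u w \<noteq> 0 \<and> L = lat u w \<and> L' = lat u (smul (unif ^ n) w))"

lemma rel_pos_basis: "rel_pos L L' n \<Longrightarrow> \<exists>a b. det2 a b \<noteq> 0 \<and> L = lat a b \<and> L' = lat a (smul (unif ^ n) b)"
  unfolding rel_pos_def by blast

lemma det2_unif_power: "det2 u w \<noteq> 0 \<Longrightarrow> det2 u (smul (unif ^ n) w) \<noteq> 0" by simp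

lemma rel_pos_subset: "rel_pos L L' n \<Longrightarrow> L' \<subseteq> L"
  unfolding rel_pos_def using lat_subset[OF lat_basis_mem(1) lat_smul_snd[OF integral_unif_power]] by blast

lemma basis_notin_scale_unif:
  assumes D: "det2 u w' \<noteq> 0" shows "u \<notin> scale unif (lat u w')"
proof
  assume "u \<in> scale unif (lat u w')"
  hence "u \<in> lat (smul unif u) (smul unif w')" by (simp add: scale_lat)
  moreover have "det2 (smul unif u) (smul unif w') \<noteq> 0" using D by simp
  ultimately have "integral (det2 u (smul unif w') / det2 (smul unif u) (smul unif w'))" using mem_lat by blast
  moreover have "det2 u (smul unif w') / det2 (smul unif u) (smul unif w') = inverse unif"
    using D by (simp add: field_simps)
  ultimately show False by (simp add: val_ge_def val_inverse)
qed

lemma rel_pos_not_subset_scale_unif: "rel_pos L L' n \<Longrightarrow> \<not> L' \<subseteq> scale unif L"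
proof
  assume "rel_pos L L' n" "L' \<subseteq> scale unif L"
  then obtain u w where a: "det2 u w \<noteq> 0" "L = lat u w" "L' = lat u (smul (unif ^ n) w)" unfolding rel_pos_def by blast
  have "u \<in> L'" using a lat_basis_mem by blast
  hence "u \<in> scale unif (lat u w)" using \<open>L' \<subseteq> scale unif L\<close> a by blast
  thus False using basis_notin_scale_unif[OF a(1)] by blast
qed

lemma rel_pos_scale_subset_iff:
  assumes "rel_pos L L' n" "s \<noteq> 0"
  shows "scale s L \<subseteq> L' \<longleftrightarrow> int n \<le> v s"
proof -
  obtain u w where a: "det2 u w \<noteq> 0" "L = lat u w" "L' = lat u (smul (unif ^ n) w)" using assms(1) unfolding rel_pos_def by blast
  let ?D = "det2 u (smul (unif ^ n) w)"
  have D: "?D \<noteq> 0" using a by simp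
  have "scale s L \<subseteq> L' \<longleftrightarrow> smul s u \<in> L' \<and> smul s w \<in> L'" using a by (simp add: scale_lat lat_subset_iff)
  also have "smul s u \<in> L' \<longleftrightarrow> integral s" using a D mem_lat[OF D, of "smul s u"] by (simp add: field_simps)
  also have "smul s w \<in> L' \<longleftrightarrow> integral (s / unif ^ n)" using a D mem_lat[OF D, of "smul s w"] by (simp add: field_simps)
  also have "integral (s / unif ^ n) \<longleftrightarrow> int n \<le> v s" using assms(2) by (simp add: val_ge_def val_divide)
  finally show ?thesis using assms(2) by (auto simp: val_ge_def)
qed

lemma rel_pos_refl: "det2 u w \<noteq> 0 \<Longrightarrow> rel_pos (lat u w) (lat u w) 0"
  unfolding rel_pos_def by (rule exI[of _ u], rule exI[of _ w]) simp

lemma rel_pos_zero: "rel_pos L L' 0 \<Longrightarrow> L' = L"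
  unfolding rel_pos_def by auto

lemma rel_pos_scale: "rel_pos L L' n \<Longrightarrow> c \<noteq> 0 \<Longrightarrow> rel_pos (scale c L) (scale c L') n"
proof -
  assume "rel_pos L L' n" "c \<noteq> 0"
  then obtain u w where a: "det2 u w \<noteq> 0" "L = lat u w" "L' = lat u (smul (unif ^ n) w)" unfolding rel_pos_def by blast
  have "scale c L = lat (smul c u) (smul c w)" "scale c L' = lat (smul c u) (smul (unif ^ n) (smul c w))"
    using a by (simp_all add: scale_lat mult.commute)
  moreover have "det2 (smul c u) (smul c w) \<noteq> 0" using a \<open>c \<noteq> 0\<close> by simp
  ultimately show ?thesis unfolding rel_pos_def by blast
qed

lemma rel_pos_lin_act: "mdet M \<noteq> 0 \<Longrightarrow> rel_pos L L' n \<Longrightarrow> rel_pos (lin_act M ` L) (lin_act M ` L') n"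
proof -
  assume a: "mdet M \<noteq> 0" "rel_pos L L' n"
  then obtain u w where h: "det2 u w \<noteq> 0" "L = lat u w" "L' = lat u (smul (unif ^ n) w)" unfolding rel_pos_def by blast
  have "lin_act M ` L = lat (lin_act M u) (lin_act M w)"
       "lin_act M ` L' = lat (lin_act M u) (smul (unif ^ n) (lin_act M w))" using h by (simp_all add: lin_act_lat lin_act_smul)
  moreover have "det2 (lin_act M u) (lin_act M w) \<noteq> 0" using a h by (simp add: det2_lin_act)
  ultimately show ?thesis unfolding rel_pos_def by blast
qed

lemma val_eq_zero_if_primitive:
  assumes D: "det2 u w \<noteq> 0" and M: "M \<subseteq> lat u w" "\<not> M \<subseteq> scale unif (lat u w)"
    and cM: "scale c M \<subseteq> lat u w" "\<not> scale c M \<subseteq> scale unif (lat u w)" and c: "c \<noteq> 0"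
  shows "v c = 0"
proof (rule ccontr)
  assume "v c \<noteq> 0"
  hence "1 \<le> v c \<or> 1 \<le> v (inverse c)" using val_inverse[OF c] by linarith
  thus False
  proof
    assume "1 \<le> v c"
    hence "scale c (lat u w) \<subseteq> scale unif (lat u w)" using scale_subset_scale[OF c unif_nonzero _ D] by simp
    moreover have "scale c M \<subseteq> scale c (lat u w)" using scale_mono[OF M(1)] .
    ultimately show False using cM(2) by blast
  next
    assume h: "1 \<le> v (inverse c)"
    have ic: "inverse c \<noteq> 0" using c by simp
    have "scale (inverse c) (lat u w) \<subseteq> scale unif (lat u w)" using scale_subset_scale[OF ic unif_nonzero _ D] h by simp
    moreover have "scale (inverse c) (scale c M) \<subseteq> scale (inverse c) (lat u w)" using scale_mono[OF cM(1)] .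
    moreover have "scale (inverse c) (scale c M) = M" using c by (simp add: scale_scale)
    ultimately show False using M(2) by blast
  qed
qed

lemma elementary_divisors_unit_pivot:
  assumes D: "det2 u w \<noteq> 0" and u'': "u'' = vadd (smul a u) (smul b w)" and w'': "w'' = vadd (smul c u) (smul d w)"
    and o: "integral a" "integral b" "integral c" "integral d" and a: "a \<noteq> 0" "v a = 0" and D'': "det2 u'' w'' \<noteq> 0"
  shows "\<exists>n. rel_pos (lat u w) (lat u'' w'') n"
proof -
  define e where "e = d - c * b / a"
  have ca: "integral (- c / a)" using o(3) a by (cases "c = 0") (auto simp: val_ge_def val_divide)
  have eo: "integral e" unfolding e_def using integral_mult[OF o(3) integral_mult[OF o(2) integral_inverse_unit[OF a]]] o(4)
    by (intro val_ge_diff) (auto simp: divide_inverse mult.assoc)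
  have w3: "vadd w'' (smul (- c / a) u'') = smul e w"
    unfolding u'' w'' e_def using a by (cases u; cases w) (auto simp: vadd_def smul_def field_simps)
  have dd: "det2 u'' w'' = a * e * det2 u w"
    unfolding u'' w'' e_def using a by (simp add: det2_swap[of w u] field_simps)
  have enz: "e \<noteq> 0" using D'' dd by auto
  have L1: "lat u'' w'' = lat u'' (smul e w)" using lat_shear_snd[OF ca D''] w3 by simp
  define n where "n = nat (v e)"
  have vn: "v e = int n" using eo enz unfolding n_def by (simp add: val_ge_def)
  define eps where "eps = e / unif ^ n"
  have epsnz: "eps \<noteq> 0" using enz by (simp add: eps_def)
  have veps: "v eps = 0" using enz vn by (simp add: eps_def val_divide)
  have e_eq: "smul e w = smul (unif ^ n) (smul eps w)" by (simp add: eps_def)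
  have Dau: "det2 (smul a u) w \<noteq> 0" using a D by simp
  have L0: "lat u w = lat u'' w"
    unfolding u'' using lat_shear_fst[OF o(2) Dau] lat_unit_fst[OF a(2) a(1) D] by simp
  have Du: "det2 u'' w \<noteq> 0" unfolding u'' using a D by simp
  have L0': "lat u'' w = lat u'' (smul eps w)" using lat_unit_snd[OF veps epsnz Du] by simp
  have Deps: "det2 u'' (smul eps w) \<noteq> 0" using Du epsnz by simp
  show ?thesis unfolding rel_pos_def using L0 L0' L1 e_eq Deps by metis
qed

lemma elementary_divisors_unit_coord:
  assumes D: "det2 u w \<noteq> 0" and u'': "u'' = vadd (smul a u) (smul b w)" and w'': "w'' = vadd (smul c u) (smul d w)"
    and o: "integral a" "integral b" "integral c" "integral d" and D'': "det2 u'' w'' \<noteq> 0"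
    and unit: "\<exists>t \<in> {a, b, c, d}. t \<noteq> 0 \<and> v t = 0"
  shows "\<exists>n. rel_pos (lat u w) (lat u'' w'') n"
proof -
  have Ds: "det2 w u \<noteq> 0" using D det2_swap[of w u] by simp
  have D''s: "det2 w'' u'' \<noteq> 0" using D'' det2_swap[of w'' u''] by simp
  have u''s: "u'' = vadd (smul b w) (smul a u)" and w''s: "w'' = vadd (smul d w) (smul c u)"
    unfolding u'' w'' by (rule vadd_commute)+
  consider "a \<noteq> 0 \<and> v a = 0" | "b \<noteq> 0 \<and> v b = 0" | "c \<noteq> 0 \<and> v c = 0" | "d \<noteq> 0 \<and> v d = 0"
    using unit by blast
  thus ?thesis
  proof cases
    case 1 thus ?thesis using elementary_divisors_unit_pivot[OF D u'' w'' o _ _ D''] by blast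
  next
    case 2
    hence "\<exists>n. rel_pos (lat w u) (lat u'' w'') n"
      using elementary_divisors_unit_pivot[OF Ds u''s w''s o(2,1,4,3) _ _ D''] by blast
    thus ?thesis using lat_swap by metis
  next
    case 3
    hence "\<exists>n. rel_pos (lat u w) (lat w'' u'') n"
      using elementary_divisors_unit_pivot[OF D w'' u'' o(3,4,1,2) _ _ D''s] by blast
    thus ?thesis using lat_swap by metis
  next
    case 4
    hence "\<exists>n. rel_pos (lat w u) (lat w'' u'') n"
      using elementary_divisors_unit_pivot[OF Ds w''s u''s o(4,3,2,1) _ _ D''s] by blast
    thus ?thesis using lat_swap by metis
  qed
qed

text \<open>Dividing the coordinates of the second basis by one of minimal valuation makes them
  integral with a unit among them.\<close>
lemma elementary_divisors:
  assumes D: "det2 u w \<noteq> 0" and D': "det2 u' w' \<noteq> 0"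
  shows "\<exists>c n. c \<noteq> 0 \<and> rel_pos (lat u w) (scale c (lat u' w')) n"
proof -
  define a where "a = det2 u' w / det2 u w"
  define b where "b = det2 u u' / det2 u w"
  define c where "c = det2 w' w / det2 u w"
  define d where "d = det2 u w' / det2 u w"
  have eu: "u' = vadd (smul a u) (smul b w)" and ew: "w' = vadd (smul c u) (smul d w)"
    unfolding a_def b_def c_def d_def using vec_decomp[OF D] by auto
  have "\<exists>x\<in>set [a,b,c,d]. x \<noteq> 0"
  proof (rule ccontr)
    assume "\<not> ?thesis" hence "a = 0" "b = 0" by auto
    hence "u' = (0,0)" using eu by (simp add: vadd_def smul_def)
    thus False using D' by (simp add: det2_def)
  qed
  then obtain t where t: "t \<in> set [a,b,c,d]" "t \<noteq> 0" "\<forall>x\<in>set [a,b,c,d]. val_ge (v t) x"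
    using exists_min_val by blast
  have ot: "integral (x * inverse t)" if "x \<in> set [a,b,c,d]" for x
    using t that by (cases "x = 0") (auto simp: val_ge_def val_mult val_inverse)
  have "\<exists>n. rel_pos (lat u w) (lat (smul (inverse t) u') (smul (inverse t) w')) n"
  proof (rule elementary_divisors_unit_coord[OF D])
    show "smul (inverse t) u' = vadd (smul (a * inverse t) u) (smul (b * inverse t) w)"
      "smul (inverse t) w' = vadd (smul (c * inverse t) u) (smul (d * inverse t) w)"
      unfolding eu ew by (simp_all add: mult.commute)
    show "integral (a * inverse t)" "integral (b * inverse t)" "integral (c * inverse t)" "integral (d * inverse t)"
      using ot by auto
    show "det2 (smul (inverse t) u') (smul (inverse t) w') \<noteq> 0" using D' t by simp
    have "t * inverse t \<in> {a * inverse t, b * inverse t, c * inverse t, d * inverse t}" using t(1) by auto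
    thus "\<exists>s \<in> {a * inverse t, b * inverse t, c * inverse t, d * inverse t}. s \<noteq> 0 \<and> v s = 0"
      using t(2) by (metis right_inverse val_one one_neq_zero)
  qed
  moreover have "lat (smul (inverse t) u') (smul (inverse t) w') = scale (inverse t) (lat u' w')"
    by (simp add: scale_lat)
  ultimately show ?thesis using t(2) by (metis inverse_nonzero_iff_nonzero)
qed

definition is_lattice :: "('a \<times> 'a) set \<Rightarrow> bool" where
  "is_lattice L \<longleftrightarrow> (\<exists>u w. det2 u w \<noteq> 0 \<and> L = lat u w)"

lemma is_lattice_lat: "det2 u w \<noteq> 0 \<Longrightarrow> is_lattice (lat u w)" unfolding is_lattice_def by blast

lemma val_ring_iff: "x \<in> val_ring v \<longleftrightarrow> integral x" by (simp add: val_ring_def val_ge_def)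

lemma olattice_iff: "olattice v L \<longleftrightarrow> is_lattice L"
proof
  assume "olattice v L"
  then obtain u1 u2 w1 w2 where h: "u1 * w2 - u2 * w1 \<noteq> 0"
    "L = {(a * u1 + b * w1, a * u2 + b * w2) |a b. a \<in> val_ring v \<and> b \<in> val_ring v}"
    unfolding olattice_def by blast
  have "L = lat (u1,u2) (w1,w2)" unfolding h(2) lat_def val_ring_iff by (simp add: vadd_def smul_def)
  moreover have "det2 (u1,u2) (w1,w2) \<noteq> 0" using h(1) by (simp add: det2_def)
  ultimately show "is_lattice L" unfolding is_lattice_def by blast
next
  assume "is_lattice L"
  then obtain u w where h: "det2 u w \<noteq> 0" "L = lat u w" unfolding is_lattice_def by blast
  obtain u1 u2 w1 w2 where e: "u = (u1,u2)" "w = (w1,w2)" by (cases u, cases w) auto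
  have "L = {(a * u1 + b * w1, a * u2 + b * w2) |a b. a \<in> val_ring v \<and> b \<in> val_ring v}"
    unfolding h(2) e lat_def val_ring_iff by (simp add: vadd_def smul_def)
  moreover have "u1 * w2 - u2 * w1 \<noteq> 0" using h(1) e by (simp add: det2_def)
  ultimately show "olattice v L" unfolding olattice_def by blast
qed

lemma is_lattice_scale: "is_lattice L \<Longrightarrow> c \<noteq> 0 \<Longrightarrow> is_lattice (scale c L)"
proof -
  assume "is_lattice L" "c \<noteq> 0"
  then obtain u w where h: "det2 u w \<noteq> 0" "L = lat u w" unfolding is_lattice_def by blast
  have "scale c L = lat (smul c u) (smul c w)" using h by (simp add: scale_lat)
  moreover have "det2 (smul c u) (smul c w) \<noteq> 0" using h \<open>c \<noteq> 0\<close> by simp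
  ultimately show ?thesis unfolding is_lattice_def by blast
qed

lemma rel_pos_is_lattice: "rel_pos L L' n \<Longrightarrow> is_lattice L \<and> is_lattice L'"
proof -
  assume "rel_pos L L' n"
  then obtain u w where h: "det2 u w \<noteq> 0" "L = lat u w" "L' = lat u (smul (unif ^ n) w)" unfolding rel_pos_def by blast
  have "det2 u (smul (unif ^ n) w) \<noteq> 0" using det2_unif_power[OF h(1)] .
  thus ?thesis using h unfolding is_lattice_def by blast
qed

lemma is_lattice_lin_act: "mdet M \<noteq> 0 \<Longrightarrow> is_lattice L \<Longrightarrow> is_lattice (lin_act M ` L)"
proof -
  assume a: "mdet M \<noteq> 0" "is_lattice L"
  then obtain u w where h: "det2 u w \<noteq> 0" "L = lat u w" unfolding is_lattice_def by blast
  have "lin_act M ` L = lat (lin_act M u) (lin_act M w)" using h lin_act_lat by simp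
  moreover have "det2 (lin_act M u) (lin_act M w) \<noteq> 0" using a h by (simp add: det2_lin_act)
  ultimately show ?thesis unfolding is_lattice_def by blast
qed

abbreviation V :: "('a \<times> 'a) set set set" where "V \<equiv> BT_vertices v"

lemma vertex_iff: "X \<in> V \<longleftrightarrow> (\<exists>L. is_lattice L \<and> X = hclass v L)"
  unfolding BT_vertices_def olattice_iff by (simp add: conj_commute)

lemma hclass_self: "L \<in> hclass v L"
  unfolding hclass_def by (rule CollectI, rule exI[of _ 1]) simp

lemma hclass_mem: "L' \<in> hclass v L \<longleftrightarrow> (\<exists>c. c \<noteq> 0 \<and> L' = scale c L)"
  unfolding hclass_def by (simp add: conj_commute)

lemma hclass_eq: "L' \<in> hclass v L \<Longrightarrow> hclass v L' = hclass v L"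
proof -
  assume "L' \<in> hclass v L"
  then obtain c where c: "c \<noteq> 0" "L' = scale c L" unfolding hclass_mem by blast
  show ?thesis
  proof (intro set_eqI iffI)
    fix M assume "M \<in> hclass v L'"
    then obtain d where d: "d \<noteq> 0" "M = scale d L'" unfolding hclass_mem by blast
    hence "M = scale (d * c) L" using c by (simp add: scale_scale)
    moreover have "d * c \<noteq> 0" using c d by simp
    ultimately show "M \<in> hclass v L" unfolding hclass_mem by blast
  next
    fix M assume "M \<in> hclass v L"
    then obtain d where d: "d \<noteq> 0" "M = scale d L" unfolding hclass_mem by blast
    hence "M = scale (d / c) L'" using c by (simp add: scale_scale)
    moreover have "d / c \<noteq> 0" using c d by simp
    ultimately show "M \<in> hclass v L'" unfolding hclass_mem by blast
  qed
qed

lemma vertex_eq_hclass: "X \<in> V \<Longrightarrow> L \<in> X \<Longrightarrow> X = hclass v L"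
proof -
  assume "X \<in> V" "L \<in> X"
  then obtain L0 where h: "X = hclass v L0" unfolding vertex_iff by blast
  show ?thesis using hclass_eq[of L L0] h \<open>L \<in> X\<close> by simp
qed

lemma vertex_mem_is_lattice: "X \<in> V \<Longrightarrow> L \<in> X \<Longrightarrow> is_lattice L"
proof -
  assume "X \<in> V" "L \<in> X"
  then obtain L0 where h: "is_lattice L0" "X = hclass v L0" unfolding vertex_iff by blast
  have "L \<in> hclass v L0" using h(2) \<open>L \<in> X\<close> by simp
  then obtain c where "c \<noteq> 0" "L = scale c L0" unfolding hclass_mem by blast
  thus ?thesis using is_lattice_scale h by simp
qed

lemma vertex_reps_homothetic: "X \<in> V \<Longrightarrow> L \<in> X \<Longrightarrow> L' \<in> X \<Longrightarrow> \<exists>c. c \<noteq> 0 \<and> L' = scale c L"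
proof -
  assume "X \<in> V" "L \<in> X" "L' \<in> X"
  hence "L' \<in> hclass v L" using vertex_eq_hclass by blast
  thus ?thesis unfolding hclass_mem .
qed

lemma vertex_scale_mem: "X \<in> V \<Longrightarrow> L \<in> X \<Longrightarrow> c \<noteq> 0 \<Longrightarrow> scale c L \<in> X"
proof -
  assume a: "X \<in> V" "L \<in> X" "c \<noteq> 0"
  have "scale c L \<in> hclass v L" unfolding hclass_mem using a(3) by blast
  thus ?thesis using vertex_eq_hclass[OF a(1,2)] by simp
qed

lemma vertex_nonempty: "X \<in> V \<Longrightarrow> \<exists>L. L \<in> X"
proof -
  assume "X \<in> V"
  then obtain L0 where h: "X = hclass v L0" unfolding vertex_iff by blast
  thus ?thesis using hclass_self by blast
qed

lemma hclass_vertex: "is_lattice L \<Longrightarrow> hclass v L \<in> V"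
  unfolding vertex_iff by blast

lemma scale_unit_is_lattice: "is_lattice L \<Longrightarrow> v c = 0 \<Longrightarrow> c \<noteq> 0 \<Longrightarrow> scale c L = L"
proof -
  assume "is_lattice L" "v c = 0" "c \<noteq> 0"
  then obtain u w where h: "det2 u w \<noteq> 0" "L = lat u w" unfolding is_lattice_def by blast
  thus ?thesis using scale_unit_lat[OF \<open>v c = 0\<close> \<open>c \<noteq> 0\<close> h(1)] by simp
qed

definition vrel :: "('a \<times> 'a) set set \<Rightarrow> ('a \<times> 'a) set set \<Rightarrow> nat \<Rightarrow> bool" where
  "vrel X Y n \<longleftrightarrow> (\<exists>L\<in>X. \<exists>L'\<in>Y. rel_pos L L' n)"

lemma vrel_from_rep: "X \<in> V \<Longrightarrow> Y \<in> V \<Longrightarrow> vrel X Y n \<Longrightarrow> L \<in> X \<Longrightarrow> \<exists>L'\<in>Y. rel_pos L L' n"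
proof -
  assume a: "X \<in> V" "Y \<in> V" "vrel X Y n" "L \<in> X"
  then obtain L1 L1' where b: "L1 \<in> X" "L1' \<in> Y" "rel_pos L1 L1' n" unfolding vrel_def by blast
  obtain c where c: "c \<noteq> 0" "L = scale c L1" using vertex_reps_homothetic[OF a(1) b(1) a(4)] by blast
  have "rel_pos L (scale c L1') n" using rel_pos_scale[OF b(3) c(1)] c by simp
  thus ?thesis using vertex_scale_mem[OF a(2) b(2) c(1)] by blast
qed

lemma vrel_exists: "X \<in> V \<Longrightarrow> Y \<in> V \<Longrightarrow> \<exists>n. vrel X Y n"
proof -
  assume a: "X \<in> V" "Y \<in> V"
  obtain L L' where b: "L \<in> X" "L' \<in> Y" using vertex_nonempty a by blast
  obtain u w u' w' where l: "det2 u w \<noteq> 0" "L = lat u w" "det2 u' w' \<noteq> 0" "L' = lat u' w'"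
    using vertex_mem_is_lattice[OF a(1) b(1)] vertex_mem_is_lattice[OF a(2) b(2)] unfolding is_lattice_def by blast
  obtain c n where "c \<noteq> 0" "rel_pos L (scale c L') n" using elementary_divisors[OF l(1) l(3)] l by blast
  thus ?thesis unfolding vrel_def using b vertex_scale_mem[OF a(2) b(2)] by blast
qed

lemma rel_pos_unique:
  assumes p1: "rel_pos L L1 n" and p2: "rel_pos L L2 m" and d: "d \<noteq> 0" "L2 = scale d L1"
  shows "L2 = L1 \<and> n = m"
proof -
  obtain u w where l: "det2 u w \<noteq> 0" "L = lat u w" using p1 unfolding rel_pos_def by blast
  have "v d = 0"
    using rel_pos_subset[OF p1] rel_pos_not_subset_scale_unif[OF p1]
      rel_pos_subset[OF p2] rel_pos_not_subset_scale_unif[OF p2] l d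
    by (intro val_eq_zero_if_primitive[OF l(1), of L1]) auto
  hence e: "L2 = L1" using scale_unit_is_lattice[OF conjunct2[OF rel_pos_is_lattice[OF p1]]] d by simp
  have "scale (unif ^ n) L \<subseteq> L1" "scale (unif ^ m) L \<subseteq> L2"
    using rel_pos_scale_subset_iff[OF p1, of "unif ^ n"] rel_pos_scale_subset_iff[OF p2, of "unif ^ m"] by auto
  hence "int m \<le> int n" "int n \<le> int m"
    using rel_pos_scale_subset_iff[OF p1, of "unif ^ m"] rel_pos_scale_subset_iff[OF p2, of "unif ^ n"] e by auto
  thus ?thesis using e by simp
qed

lemma vrel_unique: "X \<in> V \<Longrightarrow> Y \<in> V \<Longrightarrow> vrel X Y n \<Longrightarrow> vrel X Y m \<Longrightarrow> n = m"
proof -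
  assume a: "X \<in> V" "Y \<in> V" "vrel X Y n" "vrel X Y m"
  obtain L L1 where b: "L \<in> X" "L1 \<in> Y" "rel_pos L L1 n" using a(3) unfolding vrel_def by blast
  obtain L2 where c: "L2 \<in> Y" "rel_pos L L2 m" using vrel_from_rep[OF a(1,2,4) b(1)] by blast
  obtain d where "d \<noteq> 0" "L2 = scale d L1" using vertex_reps_homothetic[OF a(2) b(2) c(1)] by blast
  thus ?thesis using rel_pos_unique[OF b(3) c(2)] by blast
qed

text \<open>Well defined by \<open>vrel_unique\<close>; it equals the path distance by \<open>BT_dist_eq_vdist\<close>.\<close>
definition vdist :: "('a \<times> 'a) set set \<Rightarrow> ('a \<times> 'a) set set \<Rightarrow> nat" where
  "vdist X Y = (THE n. vrel X Y n)"

lemma vrel_vdist: "X \<in> V \<Longrightarrow> Y \<in> V \<Longrightarrow> vrel X Y (vdist X Y)"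
  unfolding vdist_def using vrel_exists vrel_unique by (metis theI)

lemma vdist_eqI: "X \<in> V \<Longrightarrow> Y \<in> V \<Longrightarrow> vrel X Y n \<Longrightarrow> vdist X Y = n"
  using vrel_vdist vrel_unique by blast

lemma vrel_refl: "X \<in> V \<Longrightarrow> vrel X X 0"
proof -
  assume a: "X \<in> V"
  obtain L where "L \<in> X" using vertex_nonempty a by blast
  moreover then obtain u w where "det2 u w \<noteq> 0" "L = lat u w" using vertex_mem_is_lattice a unfolding is_lattice_def by blast
  ultimately show ?thesis unfolding vrel_def using rel_pos_refl by blast
qed

lemma vdist_refl: "X \<in> V \<Longrightarrow> vdist X X = 0" using vdist_eqI vrel_refl by blast

section \<open>The combinatorial distance is the path distance\<close>

lemma scale_uniformizer: "is_lattice L \<Longrightarrow> p \<noteq> 0 \<Longrightarrow> v p = 1 \<Longrightarrow> scale p L = scale unif L"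
proof -
  assume a: "is_lattice L" "p \<noteq> 0" "v p = 1"
  have "v (p / unif) = 0" "p / unif \<noteq> 0" using a by (simp_all add: val_divide)
  hence "scale (p / unif) L = L" using scale_unit_is_lattice[OF a(1)] by blast
  hence "scale unif (scale (p / unif) L) = scale unif L" by simp
  thus ?thesis by (simp add: scale_scale)
qed

lemma adj_imp_vrel: assumes "BT_adj v X Y" shows "X \<in> V \<and> Y \<in> V \<and> vrel X Y 1"
proof -
  obtain L L' p where h: "X \<in> V" "Y \<in> V" "L \<in> X" "L' \<in> Y" "p \<noteq> 0" "v p = 1"
    "scale p L \<subset> L'" "L' \<subset> L" using assms unfolding BT_adj_def by blast
  have lL: "is_lattice L" "is_lattice L'" using vertex_mem_is_lattice h by blast+
  obtain u w where l: "det2 u w \<noteq> 0" "L = lat u w" using lL(1) unfolding is_lattice_def by blast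
  obtain u' w' where l': "det2 u' w' \<noteq> 0" "L' = lat u' w'" using lL(2) unfolding is_lattice_def by blast
  obtain c n where cn: "c \<noteq> 0" "rel_pos L (scale c L') n" using elementary_divisors[OF l(1) l'(1)] l l' by blast
  have sp: "scale p L = scale unif L" using scale_uniformizer[OF lL(1) h(5,6)] .
  have n1: "\<not> L' \<subseteq> scale unif L" using h(7) sp by blast
  have "v c = 0"
    using h(8) n1 rel_pos_subset[OF cn(2)] rel_pos_not_subset_scale_unif[OF cn(2)] cn(1) l
    by (intro val_eq_zero_if_primitive[OF l(1), of L' c]) auto
  hence "scale c L' = L'" using scale_unit_is_lattice[OF lL(2)] cn(1) by blast
  hence p: "rel_pos L L' n" using cn by simp
  have "int n \<le> 1" using rel_pos_scale_subset_iff[OF p, of unif] h(7) sp by auto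
  moreover have "n \<noteq> 0"
  proof
    assume "n = 0" thus False using p h(8) unfolding rel_pos_def by auto
  qed
  ultimately have "n = 1" by simp
  thus ?thesis using h p unfolding vrel_def by blast
qed

lemma vrel_imp_adj: assumes "X \<in> V" "Y \<in> V" "vrel X Y 1" shows "BT_adj v X Y"
proof -
  obtain L L' where h: "L \<in> X" "L' \<in> Y" "rel_pos L L' 1" using assms unfolding vrel_def by blast
  have a1: "scale unif L \<subseteq> L'" using rel_pos_scale_subset_iff[OF h(3), of unif] by simp
  have a2: "\<not> L' \<subseteq> scale unif L" using rel_pos_not_subset_scale_unif[OF h(3)] .
  have a3: "L' \<subseteq> L" using rel_pos_subset[OF h(3)] .
  have a4: "\<not> L \<subseteq> L'" using rel_pos_scale_subset_iff[OF h(3), of 1] by simp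
  show ?thesis unfolding BT_adj_def using assms(1,2) h(1,2) unif_nonzero val_unif a1 a2 a3 a4 by blast
qed

lemma adj_iff_vrel: "BT_adj v X Y \<longleftrightarrow> X \<in> V \<and> Y \<in> V \<and> vrel X Y 1"
  using adj_imp_vrel vrel_imp_adj by blast

lemma adj_iff_vdist: "BT_adj v X Y \<longleftrightarrow> X \<in> V \<and> Y \<in> V \<and> vdist X Y = 1"
  using adj_iff_vrel vdist_eqI vrel_vdist by metis

lemma vdist_le_if_scale_subset:
  assumes X: "X \<in> V" "L \<in> X" and Z: "Z \<in> V" "M \<in> Z" and sub: "M \<subseteq> L" and N: "scale (unif ^ N) L \<subseteq> M"
  shows "vdist X Z \<le> N"
proof -
  have lL: "is_lattice L" "is_lattice M" using vertex_mem_is_lattice X Z by blast+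
  obtain u w where l: "det2 u w \<noteq> 0" "L = lat u w" using lL(1) unfolding is_lattice_def by blast
  obtain u' w' where l': "det2 u' w' \<noteq> 0" "M = lat u' w'" using lL(2) unfolding is_lattice_def by blast
  obtain c n where cn: "c \<noteq> 0" "rel_pos L (scale c M) n" using elementary_divisors[OF l(1) l'(1)] l l' by blast
  have R: "vrel X Z n" unfolding vrel_def using cn X Z vertex_scale_mem by blast
  have vc: "v c \<le> 0"
  proof (rule ccontr)
    assume "\<not> v c \<le> 0"
    hence "scale c L \<subseteq> scale unif L" using scale_subset_scale[OF cn(1) unif_nonzero _ l(1)] l by simp
    moreover have "scale c M \<subseteq> scale c L" using scale_mono[OF sub] .
    ultimately show False using rel_pos_not_subset_scale_unif[OF cn(2)] by blast
  qed
  have "scale (c * unif ^ N) L \<subseteq> scale c M" using scale_mono[OF N, of c] by (simp add: scale_scale)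
  hence "int n \<le> v (c * unif ^ N)" using rel_pos_scale_subset_iff[OF cn(2)] cn(1) by simp
  hence "int n \<le> v c + int N" using cn(1) by (simp add: val_mult)
  thus ?thesis using vdist_eqI[OF X(1) Z(1) R] vc by simp
qed

lemma vdist_adj_step: assumes "X \<in> V" "BT_adj v Y Z" shows "vdist X Z \<le> vdist X Y + 1"
proof -
  have YZ: "Y \<in> V" "Z \<in> V" "vrel Y Z 1" using adj_imp_vrel[OF assms(2)] by auto
  obtain L where L: "L \<in> X" using vertex_nonempty assms(1) by blast
  obtain L1 where L1: "L1 \<in> Y" "rel_pos L L1 (vdist X Y)" using vrel_from_rep[OF assms(1) YZ(1) vrel_vdist[OF assms(1) YZ(1)] L] by blast
  obtain M where M: "M \<in> Z" "rel_pos L1 M 1" using vrel_from_rep[OF YZ L1(1)] by blast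
  have sub: "M \<subseteq> L" using rel_pos_subset[OF M(2)] rel_pos_subset[OF L1(2)] by blast
  have "scale unif L1 \<subseteq> M" using rel_pos_scale_subset_iff[OF M(2), of unif] by simp
  moreover have "scale (unif ^ vdist X Y) L \<subseteq> L1" using rel_pos_scale_subset_iff[OF L1(2), of "unif ^ vdist X Y"] by simp
  ultimately have "scale (unif ^ (vdist X Y + 1)) L \<subseteq> M"
    using scale_mono[of "scale (unif ^ vdist X Y) L" L1 unif] by (simp add: scale_scale mult.commute)
  thus ?thesis using vdist_le_if_scale_subset[OF assms(1) L YZ(2) M(1) sub] by simp
qed

lemma vdist_path_le:
  assumes "X \<in> V" "p 0 = X" "\<forall>i<m. BT_adj v (p i) (p (Suc i))"
  shows "p m \<in> V \<and> vdist X (p m) \<le> m"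
  using assms(3)
proof (induction m)
  case 0 thus ?case using assms vdist_refl by simp
next
  case (Suc m)
  hence IH: "p m \<in> V" "vdist X (p m) \<le> m" by auto
  have a: "BT_adj v (p m) (p (Suc m))" using Suc.prems by simp
  show ?case using vdist_adj_step[OF assms(1) a] IH adj_imp_vrel[OF a] by simp
qed

lemma path_of_length_vdist:
  assumes "X \<in> V" "Y \<in> V"
  shows "\<exists>p. p 0 = X \<and> p (vdist X Y) = Y \<and> (\<forall>i<vdist X Y. BT_adj v (p i) (p (Suc i)))"
proof -
  let ?n = "vdist X Y"
  obtain L L' where h: "L \<in> X" "L' \<in> Y" "rel_pos L L' ?n" using vrel_vdist[OF assms] unfolding vrel_def by blast
  obtain u w where l: "det2 u w \<noteq> 0" "L = lat u w" "L' = lat u (smul (unif ^ ?n) w)" using h(3) unfolding rel_pos_def by blast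
  define p where "p i = hclass v (lat u (smul (unif ^ i) w))" for i
  have il: "is_lattice (lat u (smul (unif ^ i) w))" for i unfolding is_lattice_def using det2_unif_power[OF l(1)] by blast
  have "p 0 = X" unfolding p_def using vertex_eq_hclass[OF assms(1) h(1)] l by simp
  moreover have "p ?n = Y" unfolding p_def using vertex_eq_hclass[OF assms(2) h(2)] l by simp
  moreover have "BT_adj v (p i) (p (Suc i))" for i
  proof (rule vrel_imp_adj)
    show "p i \<in> V" "p (Suc i) \<in> V" unfolding p_def using hclass_vertex il by blast+
    have "rel_pos (lat u (smul (unif ^ i) w)) (lat u (smul (unif ^ Suc i) w)) 1"
      unfolding rel_pos_def
      by (rule exI[of _ u], rule exI[of _ "smul (unif ^ i) w"]) (simp add: l(1))
    thus "vrel (p i) (p (Suc i)) 1" unfolding vrel_def p_def using hclass_self by blast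
  qed
  ultimately show ?thesis by blast
qed

lemma BT_dist_eq_vdist: assumes "X \<in> V" "Y \<in> V" shows "BT_dist v X Y = vdist X Y"
  unfolding BT_dist_def
proof (rule Least_equality)
  show "\<exists>p. p 0 = X \<and> p (vdist X Y) = Y \<and> (\<forall>i<vdist X Y. BT_adj v (p i) (p (Suc i)))" using path_of_length_vdist[OF assms] .
next
  fix m assume "\<exists>p. p 0 = X \<and> p m = Y \<and> (\<forall>i<m. BT_adj v (p i) (p (Suc i)))"
  then obtain p where "p 0 = X" "p m = Y" "\<forall>i<m. BT_adj v (p i) (p (Suc i))" by blast
  thus "vdist X Y \<le> m" using vdist_path_le[OF assms(1)] by blast
qed

lemma geodesic_vertex_eq:
  assumes X: "X \<in> V" and Y: "Y \<in> V" and Z: "Z \<in> V" and l: "det2 u w \<noteq> 0" "lat u w \<in> X" "lat u (smul (unif ^ n) w) \<in> Y"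
    and d1: "vdist X Z = i" and d2: "vdist Z Y = n - i" and i: "i \<le> n"
  shows "Z = hclass v (lat u (smul (unif ^ i) w))"
proof -
  let ?L = "lat u w" and ?L' = "lat u (smul (unif ^ n) w)"
  have pL: "rel_pos ?L ?L' n" unfolding rel_pos_def using l(1) by blast
  obtain M where M: "M \<in> Z" "rel_pos ?L M i" using vrel_from_rep[OF X Z vrel_vdist[OF X Z] l(2)] d1 by auto
  obtain N where N: "N \<in> Y" "rel_pos M N (n - i)" using vrel_from_rep[OF Z Y vrel_vdist[OF Z Y] M(1)] d2 by auto
  obtain c where c: "c \<noteq> 0" "N = scale c ?L'" using vertex_reps_homothetic[OF Y l(3) N(1)] by blast
  have s1: "scale (unif ^ i) ?L \<subseteq> M" using rel_pos_scale_subset_iff[OF M(2), of "unif ^ i"] by simp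
  have s2: "scale (unif ^ (n - i)) M \<subseteq> N" using rel_pos_scale_subset_iff[OF N(2), of "unif ^ (n - i)"] by simp
  have "scale (unif ^ (n - i)) (scale (unif ^ i) ?L) \<subseteq> N" using scale_mono[OF s1] s2 by blast
  hence "scale (unif ^ n) ?L \<subseteq> scale c ?L'" using c i by (simp add: scale_scale power_add[symmetric])
  hence "scale (inverse c) (scale (unif ^ n) ?L) \<subseteq> ?L'" using scale_mono[of _ _ "inverse c"] c
    by (metis scale_scale field_class.field_inverse scale_one subset_trans order_refl)
  hence "scale (inverse c * unif ^ n) ?L \<subseteq> ?L'" by (simp add: scale_scale)
  hence "int n \<le> v (inverse c * unif ^ n)" using rel_pos_scale_subset_iff[OF pL] c by simp
  hence vc1: "v c \<le> 0" using c by (simp add: val_mult val_inverse)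
  have vc2: "0 \<le> v c"
  proof (rule ccontr)
    assume "\<not> 0 \<le> v c"
    hence h: "1 \<le> v (inverse c)" using c by (simp add: val_inverse)
    have "N \<subseteq> ?L" using rel_pos_subset[OF N(2)] rel_pos_subset[OF M(2)] by blast
    hence "scale (inverse c) N \<subseteq> scale (inverse c) ?L" by (rule scale_mono)
    moreover have "scale (inverse c) N = ?L'" using c by (simp add: scale_scale)
    moreover have "scale (inverse c) ?L \<subseteq> scale unif ?L" using scale_subset_scale[of "inverse c" unif u w] c h l(1) by simp
    ultimately show False using rel_pos_not_subset_scale_unif[OF pL] by blast
  qed
  have N_eq: "N = ?L'" using c vc1 vc2 scale_unit_lat[of c u "smul (unif ^ n) w"] det2_unif_power[OF l(1)] by simp
  let ?M0 = "lat u (smul (unif ^ i) w)"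
  have "u \<in> M" using rel_pos_subset[OF N(2)] N_eq lat_basis_mem(1) by blast
  moreover have "smul (unif ^ i) w \<in> scale (unif ^ i) ?L" by (simp add: scale_lat lat_basis_mem)
  hence "smul (unif ^ i) w \<in> M" using s1 by blast
  moreover obtain u2 w2 where b2: "det2 u2 w2 \<noteq> 0" "?L = lat u2 w2" "M = lat u2 (smul (unif ^ i) w2)" using M(2) unfolding rel_pos_def by blast
  ultimately have sub: "?M0 \<subseteq> M" using lat_subset by metis
  have "v (det2 u w) = v (det2 u2 w2)" using val_det_eq_if_lat_eq[OF l(1) b2(1) b2(2)] .
  hence "?M0 = M" using lat_eq_if_val_det_eq[OF det2_unif_power[OF b2(1)] sub[unfolded b2(3)] det2_unif_power[OF l(1)]] b2(1) l(1)
    by (simp add: val_mult b2(3))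
  thus ?thesis using vertex_eq_hclass[OF Z M(1)] by simp
qed

lemma geodesic_between_unique:
  assumes "X \<in> V" "Y \<in> V" "Z \<in> V" "Z' \<in> V" "vdist X Y = n" "vdist X Z = i" "vdist Z Y = n - i" "vdist X Z' = i" "vdist Z' Y = n - i" "i \<le> n"
  shows "Z = Z'"
proof -
  obtain L L' where h: "L \<in> X" "L' \<in> Y" "rel_pos L L' n" using vrel_vdist[OF assms(1,2)] assms(5) unfolding vrel_def by blast
  obtain u w where b: "det2 u w \<noteq> 0" "L = lat u w" "L' = lat u (smul (unif ^ n) w)" using rel_pos_basis[OF h(3)] by blast
  have "Z = hclass v (lat u (smul (unif ^ i) w))" using geodesic_vertex_eq[OF assms(1,2,3) b(1)] h b assms by simp
  moreover have "Z' = hclass v (lat u (smul (unif ^ i) w))" using geodesic_vertex_eq[OF assms(1,2,4) b(1)] h b assms by simp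
  ultimately show ?thesis by simp
qed

lemma mat_vact_hclass: "mat_vact M (hclass v L) = hclass v (lin_act M ` L)"
proof (intro set_eqI iffI)
  fix X assume "X \<in> mat_vact M (hclass v L)"
  then obtain L0 where L0: "L0 \<in> hclass v L" "X = lin_act M ` L0" unfolding mat_vact_def by blast
  then obtain c where "c \<noteq> 0" "X = lin_act M ` scale c L" unfolding hclass_mem by blast
  thus "X \<in> hclass v (lin_act M ` L)" unfolding hclass_mem lin_act_scale by blast
next
  fix X assume "X \<in> hclass v (lin_act M ` L)"
  then obtain c where c: "c \<noteq> 0" "X = lin_act M ` scale c L" unfolding hclass_mem lin_act_scale by blast
  have "scale c L \<in> hclass v L" unfolding hclass_mem using c(1) by blast
  thus "X \<in> mat_vact M (hclass v L)" unfolding mat_vact_def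
    by (rule image_eqI[where f = "\<lambda>L. lin_act M ` L", OF c(2)])
qed

lemma mat_vact_vertex: "mdet M \<noteq> 0 \<Longrightarrow> X \<in> V \<Longrightarrow> mat_vact M X \<in> V"
proof -
  assume a: "mdet M \<noteq> 0" "X \<in> V"
  then obtain L where "is_lattice L" "X = hclass v L" unfolding vertex_iff by blast
  thus ?thesis using mat_vact_hclass is_lattice_lin_act[OF a(1)] hclass_vertex by simp
qed

lemma mem_mat_vact: "L \<in> X \<Longrightarrow> lin_act M ` L \<in> mat_vact M X"
  unfolding mat_vact_def by blast

lemma vrel_mat_vact: "mdet M \<noteq> 0 \<Longrightarrow> vrel X Y n \<Longrightarrow> vrel (mat_vact M X) (mat_vact M Y) n"
proof -
  assume a: "mdet M \<noteq> 0" "vrel X Y n"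
  then obtain L L' where h: "L \<in> X" "L' \<in> Y" "rel_pos L L' n" unfolding vrel_def by blast
  have "lin_act M ` L \<in> mat_vact M X" "lin_act M ` L' \<in> mat_vact M Y" using h mem_mat_vact by blast+
  thus ?thesis unfolding vrel_def using rel_pos_lin_act[OF a(1) h(3)] by blast
qed

lemma vdist_mat_vact: "mdet M \<noteq> 0 \<Longrightarrow> X \<in> V \<Longrightarrow> Y \<in> V \<Longrightarrow> vdist (mat_vact M X) (mat_vact M Y) = vdist X Y"
  using vdist_eqI[OF mat_vact_vertex mat_vact_vertex vrel_mat_vact[OF _ vrel_vdist]] by blast

definition mat_aut :: "'a \<times> 'a \<times> 'a \<times> 'a \<Rightarrow> ('a \<times> 'a) set set \<Rightarrow> ('a \<times> 'a) set set" where
  "mat_aut M X = (if X \<in> V then mat_vact M X else X)"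

lemma mat_aut_vertex: "X \<in> V \<Longrightarrow> mat_aut M X = mat_vact M X" unfolding mat_aut_def by simp

lemma mat_aut_hclass: "mdet M \<noteq> 0 \<Longrightarrow> is_lattice L \<Longrightarrow> mat_aut M (hclass v L) = hclass v (lin_act M ` L)"
  using mat_aut_vertex[OF hclass_vertex] mat_vact_hclass by simp

lemma BT_aut_mat_aut: assumes md: "mdet M \<noteq> 0" shows "BT_aut v (mat_aut M)"
proof -
  have mi: "mdet (minv M) \<noteq> 0" using mdet_minv_nonzero[OF md] .
  have "bij_betw (mat_aut M) V V"
  proof (rule bij_betw_byWitness[where f' = "mat_aut (minv M)"])
    show "\<forall>a\<in>V. mat_aut (minv M) (mat_aut M a) = a"
      using md mi by (simp add: mat_aut_vertex mat_vact_vertex mat_vact_minv)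
    show "\<forall>a\<in>V. mat_aut M (mat_aut (minv M) a) = a"
      using md mi by (simp add: mat_aut_vertex mat_vact_vertex mat_vact_minv_right)
    show "mat_aut M ` V \<subseteq> V" using md by (auto simp: mat_aut_vertex mat_vact_vertex)
    show "mat_aut (minv M) ` V \<subseteq> V" using mi by (auto simp: mat_aut_vertex mat_vact_vertex)
  qed
  moreover have "\<forall>X\<in>V. \<forall>Y\<in>V. BT_dist v (mat_aut M X) (mat_aut M Y) = BT_dist v X Y"
    using md by (simp add: mat_aut_vertex BT_dist_eq_vdist mat_vact_vertex vdist_mat_vact)
  moreover have "\<forall>X. X \<notin> V \<longrightarrow> mat_aut M X = X" by (simp add: mat_aut_def)
  ultimately show ?thesis unfolding BT_aut_def by blast
qed

lemma mat_aut_G_hat: assumes md: "mdet M \<noteq> 0" shows "mat_aut M \<in> G_hat v e"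
proof -
  have "\<forall>y\<in>edge_ball v y1 y2 e. mat_aut M y = mat_vact M y" for y1 y2
    unfolding edge_ball_def by (simp add: mat_aut_vertex)
  moreover have "invertible_mat M" using md invertible_mdet by blast
  ultimately show ?thesis unfolding G_hat_def using BT_aut_mat_aut[OF md] by blast
qed

lemma BT_aut_vertex: "BT_aut v g \<Longrightarrow> X \<in> V \<Longrightarrow> g X \<in> V"
  unfolding BT_aut_def bij_betw_def by blast

lemma BT_aut_vdist: "BT_aut v g \<Longrightarrow> X \<in> V \<Longrightarrow> Y \<in> V \<Longrightarrow> vdist (g X) (g Y) = vdist X Y"
  using BT_aut_vertex BT_dist_eq_vdist unfolding BT_aut_def by metis

lemma BT_aut_inj: "BT_aut v g \<Longrightarrow> X \<in> V \<Longrightarrow> Y \<in> V \<Longrightarrow> g X = g Y \<Longrightarrow> X = Y"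
  unfolding BT_aut_def bij_betw_def inj_on_def by blast

lemma BT_aut_outside: "BT_aut v g \<Longrightarrow> X \<notin> V \<Longrightarrow> g X = X"
  unfolding BT_aut_def by blast

lemma BT_aut_bij: "BT_aut v g \<Longrightarrow> bij_betw g V V" unfolding BT_aut_def by blast

lemma BT_aut_dist: "BT_aut v g \<Longrightarrow> X \<in> V \<Longrightarrow> Y \<in> V \<Longrightarrow> BT_dist v (g X) (g Y) = BT_dist v X Y"
  unfolding BT_aut_def by blast

lemma BT_aut_comp: "BT_aut v g \<Longrightarrow> BT_aut v h \<Longrightarrow> BT_aut v (g \<circ> h)"
proof -
  assume g: "BT_aut v g" and h: "BT_aut v h"
  have "bij_betw (g \<circ> h) V V" using bij_betw_trans[OF BT_aut_bij[OF h] BT_aut_bij[OF g]] .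
  moreover have "\<forall>X\<in>V. \<forall>Y\<in>V. BT_dist v ((g \<circ> h) X) ((g \<circ> h) Y) = BT_dist v X Y"
  proof (intro ballI)
    fix X Y assume "X \<in> V" "Y \<in> V"
    thus "BT_dist v ((g \<circ> h) X) ((g \<circ> h) Y) = BT_dist v X Y"
      using BT_aut_dist[OF g BT_aut_vertex[OF h] BT_aut_vertex[OF h]] BT_aut_dist[OF h] by simp
  qed
  moreover have "\<forall>X. X \<notin> V \<longrightarrow> (g \<circ> h) X = X" using BT_aut_outside[OF g] BT_aut_outside[OF h] by simp
  ultimately show ?thesis unfolding BT_aut_def by blast
qed

definition aut_inv :: "(('a \<times> 'a) set set \<Rightarrow> ('a \<times> 'a) set set) \<Rightarrow> ('a \<times> 'a) set set \<Rightarrow> ('a \<times> 'a) set set" where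
  "aut_inv g X = (if X \<in> V then inv_into V g X else X)"

lemma aut_inv_left: assumes g: "BT_aut v g" shows "aut_inv g (g X) = X"
proof (cases "X \<in> V")
  case True
  hence "g X \<in> V" using BT_aut_vertex[OF g] by blast
  thus ?thesis unfolding aut_inv_def using bij_betw_inv_into_left[OF BT_aut_bij[OF g] True] by simp
next
  case False thus ?thesis unfolding aut_inv_def using BT_aut_outside[OF g False] by simp
qed

lemma aut_inv_right: assumes g: "BT_aut v g" shows "g (aut_inv g X) = X"
proof (cases "X \<in> V")
  case True
  thus ?thesis unfolding aut_inv_def using bij_betw_inv_into_right[OF BT_aut_bij[OF g] True] by simp
next
  case False thus ?thesis unfolding aut_inv_def using BT_aut_outside[OF g False] by simp
qed

lemma aut_inv_vertex: assumes g: "BT_aut v g" and X: "X \<in> V" shows "aut_inv g X \<in> V"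
proof -
  have "X \<in> g ` V" using bij_betw_imp_surj_on[OF BT_aut_bij[OF g]] X by simp
  thus ?thesis unfolding aut_inv_def using X by (simp add: inv_into_into)
qed

lemma BT_aut_aut_inv: assumes g: "BT_aut v g" shows "BT_aut v (aut_inv g)"
proof -
  have "bij_betw (aut_inv g) V V"
    by (rule bij_betw_byWitness[where f' = g]) (auto simp: aut_inv_left aut_inv_right g aut_inv_vertex BT_aut_vertex)
  moreover have "\<forall>X\<in>V. \<forall>Y\<in>V. BT_dist v (aut_inv g X) (aut_inv g Y) = BT_dist v X Y"
  proof (intro ballI)
    fix X Y assume "X \<in> V" "Y \<in> V"
    thus "BT_dist v (aut_inv g X) (aut_inv g Y) = BT_dist v X Y"
      using BT_aut_dist[OF g aut_inv_vertex[OF g] aut_inv_vertex[OF g], of X Y] aut_inv_right[OF g] by simp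
  qed
  ultimately show ?thesis unfolding BT_aut_def by (simp add: aut_inv_def)
qed

lemma BT_aut_edge_ball:
  assumes g: "BT_aut v g" and y: "y \<in> edge_ball v y1 y2 e" and y12: "y1 \<in> V" "y2 \<in> V"
  shows "g y \<in> edge_ball v (g y1) (g y2) e"
  using y g y12 BT_aut_vertex unfolding edge_ball_def BT_aut_def by auto

lemma G_hat_BT_aut: "g \<in> G_hat v e \<Longrightarrow> BT_aut v g" unfolding G_hat_def by blast

lemma G_hat_comp: assumes g: "g \<in> G_hat v e" and h: "h \<in> G_hat v e" shows "g \<circ> h \<in> G_hat v e"
proof -
  have ga: "BT_aut v g" and ha: "BT_aut v h" using g h G_hat_BT_aut by blast+
  have "BT_adj v y1 y2 \<Longrightarrow> \<exists>M. invertible_mat M \<and> (\<forall>y\<in>edge_ball v y1 y2 e. (g \<circ> h) y = mat_vact M y)" for y1 y2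
  proof -
    assume a: "BT_adj v y1 y2"
    have y12: "y1 \<in> V" "y2 \<in> V" "vdist y1 y2 = 1" using a adj_iff_vdist by blast+
    obtain M1 where M1: "invertible_mat M1" "\<forall>y\<in>edge_ball v y1 y2 e. h y = mat_vact M1 y"
      using h a unfolding G_hat_def by blast
    have "h y1 \<in> V" "h y2 \<in> V" "vdist (h y1) (h y2) = 1" using y12 BT_aut_vertex[OF ha] BT_aut_vdist[OF ha] by simp_all
    hence "BT_adj v (h y1) (h y2)" using adj_iff_vdist by blast
    then obtain M2 where M2: "invertible_mat M2" "\<forall>y\<in>edge_ball v (h y1) (h y2) e. g y = mat_vact M2 y"
      using g unfolding G_hat_def by blast
    have "\<forall>y\<in>edge_ball v y1 y2 e. (g \<circ> h) y = mat_vact (mmul M2 M1) y"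
    proof
      fix y assume y: "y \<in> edge_ball v y1 y2 e"
      have "h y \<in> edge_ball v (h y1) (h y2) e" using BT_aut_edge_ball[OF ha y y12(1,2)] .
      hence e1: "g (h y) = mat_vact M2 (h y)" using M2(2) by blast
      have e2: "h y = mat_vact M1 y" using M1(2) y by blast
      show "(g \<circ> h) y = mat_vact (mmul M2 M1) y" using e1 e2 by (simp add: mat_vact_comp)
    qed
    moreover have "invertible_mat (mmul M2 M1)" using M1 M2 by (simp add: invertible_mdet mdet_mmul)
    ultimately show ?thesis by blast
  qed
  thus ?thesis unfolding G_hat_def using BT_aut_comp[OF ga ha] by blast
qed

lemma G_hat_aut_inv: assumes g: "g \<in> G_hat v e" shows "aut_inv g \<in> G_hat v e"
proof -
  have ga: "BT_aut v g" using g G_hat_BT_aut by blast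
  have ia: "BT_aut v (aut_inv g)" using BT_aut_aut_inv[OF ga] .
  have "BT_adj v y1 y2 \<Longrightarrow> \<exists>M. invertible_mat M \<and> (\<forall>y\<in>edge_ball v y1 y2 e. aut_inv g y = mat_vact M y)" for y1 y2
  proof -
    assume a: "BT_adj v y1 y2"
    have y12: "y1 \<in> V" "y2 \<in> V" "vdist y1 y2 = 1" using a adj_iff_vdist by blast+
    have "aut_inv g y1 \<in> V" "aut_inv g y2 \<in> V" "vdist (aut_inv g y1) (aut_inv g y2) = 1"
      using y12 BT_aut_vertex[OF ia] BT_aut_vdist[OF ia] by simp_all
    hence "BT_adj v (aut_inv g y1) (aut_inv g y2)" using adj_iff_vdist by blast
    then obtain M where M: "invertible_mat M" "\<forall>y\<in>edge_ball v (aut_inv g y1) (aut_inv g y2) e. g y = mat_vact M y"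
      using g unfolding G_hat_def by blast
    have md: "mdet M \<noteq> 0" using M(1) invertible_mdet by blast
    have "\<forall>y\<in>edge_ball v y1 y2 e. aut_inv g y = mat_vact (minv M) y"
    proof
      fix y assume "y \<in> edge_ball v y1 y2 e"
      hence "aut_inv g y \<in> edge_ball v (aut_inv g y1) (aut_inv g y2) e" using BT_aut_edge_ball[OF ia _ y12(1,2)] by blast
      hence "g (aut_inv g y) = mat_vact M (aut_inv g y)" using M(2) by blast
      hence "mat_vact (minv M) y = aut_inv g y" using aut_inv_right[OF ga] mat_vact_minv[OF md] by metis
      thus "aut_inv g y = mat_vact (minv M) y" by simp
    qed
    moreover have "invertible_mat (minv M)" using md mdet_minv_nonzero invertible_mdet by blast
    ultimately show ?thesis by blast
  qed
  thus ?thesis unfolding G_hat_def using ia by blast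
qed

lemma G_hat_id: "id \<in> G_hat v e"
proof -
  have "mat_aut (1,0,0,1) = id"
  proof
    fix X show "mat_aut (1,0,0,1) X = id X"
      unfolding mat_aut_def mat_vact_def lin_act_def by (simp add: case_prod_beta)
  qed
  thus ?thesis using mat_aut_G_hat[of "(1,0,0,1)"] by (simp add: mdet_def)
qed

section \<open>Geodesic rays\<close>

lemma ray_reps_decreasing:
  assumes yV: "\<forall>n. y n \<in> V" and yD: "\<forall>i j. vdist (y i) (y j) = nat \<bar>int i - int j\<bar>"
    and L: "L \<in> y 0"
    and Ln: "\<forall>n. Ln n \<in> y n \<and> rel_pos L (Ln n) n"
  shows "Ln (Suc n) \<subseteq> Ln n"
proof -
  have ps: "rel_pos L (Ln (Suc n)) (Suc n)" using Ln by blast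
  obtain a b where ab: "det2 a b \<noteq> 0" "L = lat a b" "Ln (Suc n) = lat a (smul (unif ^ Suc n) b)"
    using rel_pos_basis[OF ps] by blast
  have d1: "vdist (y 0) (y n) = n" using yD by simp
  have d2: "vdist (y n) (y (Suc n)) = Suc n - n" using yD by simp
  have m0: "lat a b \<in> y 0" using ab L by simp
  have m1: "lat a (smul (unif ^ Suc n) b) \<in> y (Suc n)" using ab(3) Ln by metis
  have "y n = hclass v (lat a (smul (unif ^ n) b))"
    by (rule geodesic_vertex_eq[OF yV[rule_format] yV[rule_format] yV[rule_format] ab(1) m0 m1 d1 d2]) simp
  hence mem: "lat a (smul (unif ^ n) b) \<in> y n" using hclass_self by simp
  have p: "rel_pos L (lat a (smul (unif ^ n) b)) n" unfolding rel_pos_def using ab by blast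
  have Lnn: "Ln n \<in> y n" "rel_pos L (Ln n) n" using Ln by blast+
  obtain d where d: "d \<noteq> 0" "lat a (smul (unif ^ n) b) = scale d (Ln n)" using vertex_reps_homothetic[OF yV[rule_format] Lnn(1) mem] by blast
  have "lat a (smul (unif ^ n) b) = Ln n" using rel_pos_unique[OF Lnn(2) p d] by blast
  moreover have "lat a (smul (unif ^ Suc n) b) \<subseteq> lat a (smul (unif ^ n) b)" by (rule lat_unif_power_Suc_subset)
  ultimately show ?thesis using ab(3) by simp
qed

lemma ray_reps:
  assumes yV: "\<forall>n. y n \<in> V" and yD: "\<forall>i j. vdist (y i) (y j) = nat \<bar>int i - int j\<bar>"
  obtains L Ln where "L \<in> y 0" "\<forall>n. Ln n \<in> y n \<and> rel_pos L (Ln n) n" "\<And>n m. n \<le> m \<Longrightarrow> Ln m \<subseteq> Ln n"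
proof -
  obtain L where L: "L \<in> y 0" using vertex_nonempty yV by blast
  have "\<exists>M \<in> y n. rel_pos L M n" for n
    using vrel_from_rep[OF yV[rule_format] yV[rule_format] vrel_vdist[OF yV[rule_format] yV[rule_format]] L, of n] yD
    by simp
  then obtain Ln where Ln: "\<forall>n. Ln n \<in> y n \<and> rel_pos L (Ln n) n" by metis
  have "Ln (Suc n) \<subseteq> Ln n" for n using ray_reps_decreasing[OF yV yD L Ln] .
  hence "n \<le> m \<Longrightarrow> Ln m \<subseteq> Ln n" for n m using lift_Suc_antimono_le[of Ln] by blast
  with L Ln that show thesis by blast
qed

lemma rel_pos_normal_form:
  assumes e: "det2 e1 e2 \<noteq> 0" and pos: "rel_pos (lat e1 e2) M n"
    and sub: "M \<subseteq> lat e1 (smul unif e2)"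
  shows "\<exists>t. integral t \<and> M = lat (vadd e1 (smul t e2)) (smul (unif ^ n) e2)"
proof -
  obtain a b where ab: "det2 a b \<noteq> 0" "lat e1 e2 = lat a b" "M = lat a (smul (unif ^ n) b)"
    using rel_pos_basis[OF pos] by blast
  have aM: "a \<in> M" unfolding ab(3) by (rule lat_basis_mem(1))
  have "a \<in> lat e1 e2" unfolding ab(2) by (rule lat_basis_mem(1))
  then obtain al be where abe: "integral al" "integral be" "a = vadd (smul al e1) (smul be e2)"
    unfolding lat_def by blast
  have "a = vadd (smul al e1) (smul (be / unif) (smul unif e2))" using abe(3) by simp
  hence "integral (be / unif)" using aM sub mem_lat_comb[of e1 "smul unif e2" al "be / unif"] e by auto
  hence be: "val_ge 1 be" by (simp add: integral_divide_unif)
  have "\<not> val_ge 1 al"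
  proof
    assume "val_ge 1 al"
    moreover have "a = vadd (smul (al / unif) (smul unif e1)) (smul (be / unif) (smul unif e2))"
      using abe(3) by simp
    ultimately have "a \<in> lat (smul unif e1) (smul unif e2)"
      using mem_lat_comb[of "smul unif e1" "smul unif e2" "al / unif" "be / unif"] be e
      by (simp add: integral_divide_unif)
    hence "a \<in> scale unif (lat e1 e2)" by (simp add: scale_lat)
    thus False using basis_notin_scale_unif[OF ab(1)] ab(2) by simp
  qed
  hence al: "al \<noteq> 0" "v al = 0" using abe(1) by (auto simp: val_ge_def)
  define t where "t = be / al"
  have t: "integral t" unfolding t_def using abe(2) al by (cases "be = 0") (auto simp: val_ge_def val_divide)
  define z where "z = vadd e1 (smul t e2)"
  have "z = smul (inverse al) a"
    unfolding z_def t_def abe(3) using al by (simp add: smul_def vadd_def field_simps)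
  hence zM: "z \<in> M" using lat_smul_closed[OF aM[unfolded ab(3)] integral_inverse_unit[OF al]] ab(3) by simp
  have "smul (unif ^ n) e2 \<in> scale (unif ^ n) (lat e1 e2)" unfolding scale_lat using lat_basis_mem(2) by blast
  moreover have "scale (unif ^ n) (lat e1 e2) \<subseteq> M" using rel_pos_scale_subset_iff[OF pos] by simp
  ultimately have "smul (unif ^ n) e2 \<in> M" by blast
  hence sub: "lat z (smul (unif ^ n) e2) \<subseteq> lat a (smul (unif ^ n) b)" using zM ab(3) lat_subset by simp
  have "v (det2 a b) = v (det2 e1 e2)" using val_det_eq_if_lat_eq[OF ab(1) e] ab(2) by simp
  hence "lat z (smul (unif ^ n) e2) = M"
    using lat_eq_if_val_det_eq[OF det2_unif_power[OF ab(1)] sub] e ab by (simp add: z_def val_mult)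
  thus ?thesis using t unfolding z_def by blast
qed

lemma ray_normal_forms:
  assumes yV: "\<forall>n. y n \<in> V" and yD: "\<forall>i j. vdist (y i) (y j) = nat \<bar>int i - int j\<bar>"
  obtains e1 e2 s where "det2 e1 e2 \<noteq> 0"
    "\<And>n. lat (vadd e1 (smul (s n) e2)) (smul (unif ^ n) e2) \<in> y n"
    "\<And>n m. n \<le> m \<Longrightarrow>
      lat (vadd e1 (smul (s m) e2)) (smul (unif ^ m) e2) \<subseteq> lat (vadd e1 (smul (s n) e2)) (smul (unif ^ n) e2)"
proof -
  obtain L Ln where L: "L \<in> y 0" and Ln: "\<forall>n. Ln n \<in> y n \<and> rel_pos L (Ln n) n"
    and dec: "\<And>n m. n \<le> m \<Longrightarrow> Ln m \<subseteq> Ln n"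
    using ray_reps[OF yV yD] by blast
  obtain e1 e2 where e: "det2 e1 e2 \<noteq> 0" "L = lat e1 e2" "Ln 1 = lat e1 (smul unif e2)"
    using rel_pos_basis Ln by (metis power_one_right)
  have "\<exists>t. Ln n = lat (vadd e1 (smul t e2)) (smul (unif ^ n) e2)" for n
  proof (cases "n = 0")
    case True
    hence "Ln n = L" using Ln rel_pos_zero by blast
    thus ?thesis using True e(2) by (intro exI[of _ 0]) simp
  next
    case False
    hence "Ln n \<subseteq> lat e1 (smul unif e2)" using dec[of 1 n] e(3) by simp
    thus ?thesis using rel_pos_normal_form[OF e(1), of "Ln n" n] Ln e(2) by blast
  qed
  then obtain s where s: "\<And>n. Ln n = lat (vadd e1 (smul (s n) e2)) (smul (unif ^ n) e2)" by metis
  show thesis using that[OF e(1), of s] Ln dec unfolding s by blast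
qed

text \<open>In the nested normal forms $\langle e_1 + s_n e_2, \varpi^n e_2\rangle$ the $s_n$ form a
  Cauchy sequence, and $u = e_1 + (\lim s_n) e_2$.\<close>
lemma ray_standard_form:
  assumes comp: "val_complete v"
    and yV: "\<forall>n. y n \<in> V" and yD: "\<forall>i j. vdist (y i) (y j) = nat \<bar>int i - int j\<bar>"
  shows "\<exists>u e2. det2 u e2 \<noteq> 0 \<and> (\<forall>n. y n = hclass v (lat u (smul (unif ^ n) e2)))"
proof -
  obtain e1 e2 s where e: "det2 e1 e2 \<noteq> 0"
    and mem: "\<And>n. lat (vadd e1 (smul (s n) e2)) (smul (unif ^ n) e2) \<in> y n"
    and dec: "\<And>n m. n \<le> m \<Longrightarrow>
      lat (vadd e1 (smul (s m) e2)) (smul (unif ^ m) e2) \<subseteq> lat (vadd e1 (smul (s n) e2)) (smul (unif ^ n) e2)"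
    using ray_normal_forms[OF yV yD] by blast
  have Dn: "det2 (vadd e1 (smul (s n) e2)) (smul (unif ^ n) e2) \<noteq> 0" for n using e by simp
  have cauchy: "val_ge (int n) (s m - s n)" if "n \<le> m" for n m
  proof -
    let ?z = "vadd e1 (smul (s n) e2)"
    have "vadd e1 (smul (s m) e2) = vadd (smul 1 ?z) (smul ((s m - s n) / unif ^ n) (smul (unif ^ n) e2))"
      by (simp add: vadd_smul_shift[of e1 "s m" e2 "s n"])
    moreover have "vadd e1 (smul (s m) e2) \<in> lat ?z (smul (unif ^ n) e2)"
      using dec[OF that] lat_basis_mem(1) by blast
    ultimately have "integral ((s m - s n) / unif ^ n)"
      using mem_lat_comb[OF Dn[of n], of 1 "(s m - s n) / unif ^ n"] by simp
    thus ?thesis by (simp add: integral_divide_unif_power)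
  qed
  obtain l where l: "\<And>n. val_ge (int n) (l - s n)" using val_complete_limit[OF comp cauchy] by blast
  define u where "u = vadd e1 (smul l e2)"
  have "lat u (smul (unif ^ n) e2) = lat (vadd e1 (smul (s n) e2)) (smul (unif ^ n) e2)" for n
  proof -
    have u: "u = vadd (vadd e1 (smul (s n) e2)) (smul ((l - s n) / unif ^ n) (smul (unif ^ n) e2))"
      unfolding u_def by (simp add: vadd_smul_shift[of e1 l e2 "s n"])
    have "integral ((l - s n) / unif ^ n)" using l by (simp add: integral_divide_unif_power)
    thus ?thesis unfolding u by (rule lat_shear_fst[OF _ Dn])
  qed
  moreover have "det2 u e2 \<noteq> 0" unfolding u_def using e by simp
  ultimately show ?thesis using vertex_eq_hclass yV mem by metis
qed

section \<open>The neighbours of a vertex off a ray\<close>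

text \<open>If $x_k = [\langle u, e_2\rangle]$ and $x_{k+1} = [\langle u, \varpi e_2\rangle]$, the other
  neighbours of $x_k$ are the classes of $\langle a u + e_2, \varpi u\rangle$ for $a \in \mathfrak{o}$,
  and they depend only on $a \bmod \varpi$.\<close>
definition branch_vec :: "'a \<times> 'a \<Rightarrow> 'a \<times> 'a \<Rightarrow> 'a \<Rightarrow> 'a \<times> 'a" where
  "branch_vec u e2 a = vadd (smul a u) e2"

definition branch_lat :: "'a \<times> 'a \<Rightarrow> 'a \<times> 'a \<Rightarrow> 'a \<Rightarrow> ('a \<times> 'a) set" where
  "branch_lat u e2 a = lat (branch_vec u e2 a) (smul unif u)"

definition branch_vertex :: "'a \<times> 'a \<Rightarrow> 'a \<times> 'a \<Rightarrow> 'a \<Rightarrow> ('a \<times> 'a) set set" where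
  "branch_vertex u e2 a = hclass v (branch_lat u e2 a)"

lemma det2_branch_vec: "det2 (branch_vec u e2 a) u = - det2 u e2"
  unfolding branch_vec_def by (simp add: det2_swap[of e2 u])

lemma lat_branch_vec: "integral a \<Longrightarrow> det2 u e2 \<noteq> 0 \<Longrightarrow> lat (branch_vec u e2 a) u = lat u e2"
proof -
  assume a: "integral a" "det2 u e2 \<noteq> 0"
  have e: "branch_vec u e2 a = vadd e2 (smul a u)" unfolding branch_vec_def by (rule vadd_commute)
  have "lat (branch_vec u e2 a) u = lat u (branch_vec u e2 a)" by (rule lat_swap)
  also have "\<dots> = lat u e2" unfolding e by (rule lat_shear_snd[OF a])
  finally show ?thesis .
qed

lemma rel_pos_branch_lat: "integral a \<Longrightarrow> det2 u e2 \<noteq> 0 \<Longrightarrow> rel_pos (lat u e2) (branch_lat u e2 a) 1"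
proof -
  assume a: "integral a" "det2 u e2 \<noteq> 0"
  have "det2 (branch_vec u e2 a) u \<noteq> 0" using a(2) det2_branch_vec[of u e2 a] by simp
  moreover have "lat u e2 = lat (branch_vec u e2 a) u" using lat_branch_vec[OF a] by simp
  moreover have "branch_lat u e2 a = lat (branch_vec u e2 a) (smul (unif ^ 1) u)" unfolding branch_lat_def by simp
  ultimately show ?thesis unfolding rel_pos_def by blast
qed

lemma rel_pos_unif_snd: "det2 u e2 \<noteq> 0 \<Longrightarrow> rel_pos (lat u e2) (lat u (smul unif e2)) 1"
  unfolding rel_pos_def by (rule exI[of _ u], rule exI[of _ e2]) simp

lemma adj_branch_vertex: assumes "integral a" "det2 u e2 \<noteq> 0"
  shows "BT_adj v (hclass v (lat u e2)) (branch_vertex u e2 a)"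
proof (rule vrel_imp_adj)
  have p: "rel_pos (lat u e2) (branch_lat u e2 a) 1" using rel_pos_branch_lat[OF assms] .
  show "hclass v (lat u e2) \<in> V" using hclass_vertex is_lattice_lat assms(2) by blast
  show "branch_vertex u e2 a \<in> V" unfolding branch_vertex_def using hclass_vertex rel_pos_is_lattice[OF p] by blast
  show "vrel (hclass v (lat u e2)) (branch_vertex u e2 a) 1" unfolding vrel_def branch_vertex_def using p hclass_self by blast
qed

lemma branch_vertex_ne_unif: assumes a: "integral a" and D: "det2 u e2 \<noteq> 0"
  shows "branch_vertex u e2 a \<noteq> hclass v (lat u (smul unif e2))"
proof
  assume eq: "branch_vertex u e2 a = hclass v (lat u (smul unif e2))"
  have "branch_lat u e2 a \<in> hclass v (lat u (smul unif e2))" using eq hclass_self unfolding branch_vertex_def by metis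
  then obtain d where d: "d \<noteq> 0" "branch_lat u e2 a = scale d (lat u (smul unif e2))" unfolding hclass_mem by blast
  have "branch_lat u e2 a = lat u (smul unif e2)" using rel_pos_unique[OF rel_pos_unif_snd[OF D] rel_pos_branch_lat[OF a D] d] by blast
  moreover have "branch_vec u e2 a \<in> branch_lat u e2 a" unfolding branch_lat_def by (rule lat_basis_mem(1))
  ultimately have "branch_vec u e2 a \<in> lat u (smul unif e2)" by simp
  moreover have "branch_vec u e2 a = vadd (smul a u) (smul (1 / unif) (smul unif e2))" unfolding branch_vec_def by simp
  moreover have "det2 u (smul unif e2) \<noteq> 0" using D by simp
  ultimately have "integral (1 / unif)" using mem_lat_comb[of u "smul unif e2" a "1/unif"] by simp
  thus False by (simp add: val_ge_def val_divide)
qed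

lemma sublattice_eq_lat_unif_snd:
  assumes D: "det2 u e2 \<noteq> 0" "det2 a b \<noteq> 0" and L: "lat u e2 = lat a b"
    and a: "a = vadd (smul al u) (smul be e2)" "integral al" "val_ge 1 be"
  shows "lat a (smul unif b) = lat u (smul unif e2)"
proof -
  have D1: "det2 u (smul unif e2) \<noteq> 0" using D by simp
  have "a = vadd (smul al u) (smul (be / unif) (smul unif e2))" using a(1) by simp
  hence aL1: "a \<in> lat u (smul unif e2)"
    using mem_lat_comb[OF D1, of al "be / unif"] a(2,3) by (simp add: integral_divide_unif)
  have "scale unif (lat a b) \<subseteq> lat u (smul unif e2)" unfolding L[symmetric] scale_lat
    by (rule lat_subset[OF lat_smul_fst lat_basis_mem(2)]) (simp add: val_ge_def)
  hence "smul unif b \<in> lat u (smul unif e2)" unfolding scale_lat using lat_basis_mem(2) by blast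
  hence sub: "lat a (smul unif b) \<subseteq> lat u (smul unif e2)" using aL1 lat_subset by blast
  have "v (det2 a b) = v (det2 u e2)" using val_det_eq_if_lat_eq[OF D(2,1)] L by simp
  thus ?thesis using lat_eq_if_val_det_eq[OF D1 sub] D by (simp add: val_mult)
qed

lemma sublattice_eq_branch_lat:
  assumes D: "det2 u e2 \<noteq> 0" "det2 a b \<noteq> 0" and L: "lat u e2 = lat a b"
    and a: "a = vadd (smul al u) (smul be e2)" "integral al" "be \<noteq> 0" "v be = 0"
  shows "lat a (smul unif b) = branch_lat u e2 (al / be)"
proof -
  let ?w = "branch_vec u e2 (al / be)"
  have al': "integral (al / be)" using a by (cases "al = 0") (auto simp: val_ge_def val_divide)
  have DN: "det2 ?w (smul unif u) \<noteq> 0" using det2_branch_vec[of u e2 "al / be"] D by simp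
  have "a = smul be ?w" unfolding a(1) branch_vec_def using a(3) by (simp add: vadd_def smul_def field_simps)
  hence aN: "a \<in> lat ?w (smul unif u)" by (simp add: lat_smul_fst val_ge_def a(4))
  have "smul unif e2 = vadd (smul unif ?w) (smul (- (al / be)) (smul unif u))"
    unfolding branch_vec_def by (simp add: vadd_def smul_def algebra_simps)
  hence "smul unif e2 \<in> lat ?w (smul unif u)"
    using mem_lat_comb[OF DN, of unif "- (al / be)"] al' by (simp add: val_ge_def)
  hence "scale unif (lat a b) \<subseteq> lat ?w (smul unif u)"
    unfolding L[symmetric] scale_lat by (rule lat_subset[OF lat_basis_mem(2)])
  hence "smul unif b \<in> lat ?w (smul unif u)" unfolding scale_lat using lat_basis_mem(2) by blast
  hence sub: "lat a (smul unif b) \<subseteq> lat ?w (smul unif u)" using aN lat_subset by blast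
  have "v (det2 a b) = v (det2 u e2)" using val_det_eq_if_lat_eq[OF D(2,1)] L by simp
  thus ?thesis using lat_eq_if_val_det_eq[OF DN sub] D det2_branch_vec[of u e2 "al / be"]
    unfolding branch_lat_def by (simp add: val_mult)
qed

lemma rel_pos_one_cases:
  assumes D: "det2 u e2 \<noteq> 0" and pos: "rel_pos (lat u e2) L' 1"
  shows "L' = lat u (smul unif e2) \<or> (\<exists>a. integral a \<and> L' = branch_lat u e2 a)"
proof -
  obtain a b where ab: "det2 a b \<noteq> 0" "lat u e2 = lat a b" "L' = lat a (smul unif b)"
    using rel_pos_basis[OF pos] by auto
  have "a \<in> lat u e2" unfolding ab(2) by (rule lat_basis_mem(1))
  then obtain al be where abe: "integral al" "integral be" "a = vadd (smul al u) (smul be e2)"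
    unfolding lat_def by blast
  show ?thesis
  proof (cases "val_ge 1 be")
    case True
    thus ?thesis using sublattice_eq_lat_unif_snd[OF D ab(1,2) abe(3,1)] ab(3) by simp
  next
    case False
    hence "be \<noteq> 0" "v be = 0" using abe(2) by (auto simp: val_ge_def)
    moreover have "integral (al / be)" using abe(1) calculation by (cases "al = 0") (auto simp: val_ge_def val_divide)
    ultimately show ?thesis using sublattice_eq_branch_lat[OF D ab(1,2) abe(3,1)] ab(3) by blast
  qed
qed

lemma adj_eq_branch_vertex: assumes D: "det2 u e2 \<noteq> 0" and adj: "BT_adj v (hclass v (lat u e2)) Y"
  and ne: "Y \<noteq> hclass v (lat u (smul unif e2))"
  shows "\<exists>a. integral a \<and> Y = branch_vertex u e2 a"
proof -
  have XY: "hclass v (lat u e2) \<in> V" "Y \<in> V" "vrel (hclass v (lat u e2)) Y 1" using adj_imp_vrel[OF adj] by auto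
  obtain L' where L': "L' \<in> Y" "rel_pos (lat u e2) L' 1" using vrel_from_rep[OF XY hclass_self] by blast
  hence "Y = hclass v L'" using vertex_eq_hclass[OF XY(2)] by blast
  thus ?thesis using rel_pos_one_cases[OF D L'(2)] ne unfolding branch_vertex_def by blast
qed

lemma branch_vertex_eq_iff: assumes a: "integral a" and b: "integral b" and D: "det2 u e2 \<noteq> 0"
  shows "branch_vertex u e2 a = branch_vertex u e2 b \<longleftrightarrow> val_ge 1 (a - b)"
proof
  have DN: "det2 (branch_vec u e2 b) (smul unif u) \<noteq> 0" using det2_branch_vec[of u e2 b] D by simp
  have wab: "branch_vec u e2 a = vadd (smul 1 (branch_vec u e2 b)) (smul ((a - b) / unif) (smul unif u))" unfolding branch_vec_def
    using unif_nonzero by (simp add: vadd_def smul_def field_simps)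
  {
    assume eq: "branch_vertex u e2 a = branch_vertex u e2 b"
    have "branch_lat u e2 a \<in> hclass v (branch_lat u e2 b)" using eq hclass_self unfolding branch_vertex_def by metis
    then obtain d where d: "d \<noteq> 0" "branch_lat u e2 a = scale d (branch_lat u e2 b)" unfolding hclass_mem by blast
    have "branch_lat u e2 a = branch_lat u e2 b" using rel_pos_unique[OF rel_pos_branch_lat[OF b D] rel_pos_branch_lat[OF a D] d] by blast
    moreover have "branch_vec u e2 a \<in> branch_lat u e2 a" unfolding branch_lat_def by (rule lat_basis_mem(1))
    ultimately have "branch_vec u e2 a \<in> branch_lat u e2 b" by simp
    hence "integral ((a - b) / unif)" using mem_lat_comb[OF DN, of 1 "(a - b) / unif"] wab unfolding branch_lat_def by simp
    thus "val_ge 1 (a - b)" by (cases "a - b = 0") (auto simp: val_ge_def val_divide)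
  }
  assume "val_ge 1 (a - b)"
  hence o: "integral ((a - b) / unif)" by (cases "a - b = 0") (auto simp: val_ge_def val_divide)
  have "branch_vec u e2 a = vadd (branch_vec u e2 b) (smul ((a - b) / unif) (smul unif u))" using wab by simp
  hence "branch_lat u e2 a = branch_lat u e2 b" unfolding branch_lat_def using lat_shear_fst[OF o DN] by simp
  thus "branch_vertex u e2 a = branch_vertex u e2 b" unfolding branch_vertex_def by simp
qed

definition transvection_aut :: "'a \<times> 'a \<Rightarrow> 'a \<times> 'a \<Rightarrow> 'a \<Rightarrow> ('a \<times> 'a) set set \<Rightarrow> ('a \<times> 'a) set set" where
  "transvection_aut u e2 t = mat_aut (transvection u (t / det2 u e2))"

lemma transvection_aut_G_hat: "transvection_aut u e2 t \<in> G_hat v e"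
  unfolding transvection_aut_def by (rule mat_aut_G_hat) (simp add: mdet_transvection)

lemma transvection_aut_fixes_ray: assumes D: "det2 u e2 \<noteq> 0" and t: "integral t"
  shows "transvection_aut u e2 t (hclass v (lat u (smul (unif ^ n) e2))) = hclass v (lat u (smul (unif ^ n) e2))"
proof -
  let ?M = "transvection u (t / det2 u e2)"
  have l1: "lin_act ?M u = u" by (simp add: lin_act_transvection)
  have l2: "lin_act ?M (smul (unif ^ n) e2) = vadd (smul (unif ^ n) e2) (smul (t * unif ^ n) u)"
    using D by (simp add: lin_act_transvection)
  have "lin_act ?M ` lat u (smul (unif ^ n) e2) = lat u (smul (unif ^ n) e2)"
    unfolding lin_act_lat l1 l2 using lat_shear_snd[of "t * unif ^ n" u "smul (unif ^ n) e2"] integral_mult[OF t integral_unif_power] D by simp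
  moreover have "mdet ?M \<noteq> 0" by (simp add: mdet_transvection)
  ultimately show ?thesis unfolding transvection_aut_def using mat_aut_hclass[OF _ is_lattice_lat[OF det2_unif_power[OF D]], of ?M n] by simp
qed

lemma transvection_aut_branch_vertex: assumes D: "det2 u e2 \<noteq> 0"
  shows "transvection_aut u e2 t (branch_vertex u e2 a) = branch_vertex u e2 (a + t)"
proof -
  let ?M = "transvection u (t / det2 u e2)"
  have l1: "lin_act ?M (smul unif u) = smul unif u" by (simp add: lin_act_transvection)
  have dw: "det2 u (branch_vec u e2 a) = det2 u e2" unfolding branch_vec_def by simp
  have "lin_act ?M (branch_vec u e2 a) = vadd (branch_vec u e2 a) (smul t u)"
    using D by (simp add: lin_act_transvection dw)
  also have "\<dots> = branch_vec u e2 (a + t)" unfolding branch_vec_def by (simp add: vadd_def smul_def algebra_simps)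
  finally have l2: "lin_act ?M (branch_vec u e2 a) = branch_vec u e2 (a + t)" .
  have DN: "det2 (branch_vec u e2 a) (smul unif u) \<noteq> 0" using det2_branch_vec[of u e2 a] D by simp
  have "lin_act ?M ` branch_lat u e2 a = branch_lat u e2 (a + t)" unfolding branch_lat_def lin_act_lat l1 l2 ..
  moreover have "mdet ?M \<noteq> 0" by (simp add: mdet_transvection)
  ultimately show ?thesis unfolding transvection_aut_def branch_vertex_def branch_lat_def
    using mat_aut_hclass[OF _ is_lattice_lat[OF DN], of ?M] by simp
qed

section \<open>The index $[\hat N_k : \hat N_{k-1}]$\<close>

lemma fixes_ray_from:
  assumes xV: "\<forall>i. x i \<in> V" and f: "f \<in> G_hat v e" and fx: "\<forall>j\<ge>m. f (x j) = x j"
    and p: "BT_ray v p" "p 0 = x m" "ray_equiv p (pos_ray x)"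
  shows "f (p i) = p i"
proof -
  have fa: "BT_aut v f" using G_hat_BT_aut[OF f] .
  obtain a b where ab: "\<forall>n. p (n + a) = x (int (n + b))" using p(3) unfolding ray_equiv_def pos_ray_def by blast
  have pV: "p j \<in> V" for j using p(1) unfolding BT_ray_def by blast
  have pD: "vdist (p j) (p l) = nat \<bar>int j - int l\<bar>" for j l
    using p(1) BT_dist_eq_vdist[OF pV pV] unfolding BT_ray_def by metis
  define K where "K = i + a + nat \<bar>m\<bar>"
  have "p K = x (int (i + nat \<bar>m\<bar> + b))" using ab[rule_format, of "i + nat \<bar>m\<bar>"] unfolding K_def by (simp add: ac_simps)
  moreover have "int (i + nat \<bar>m\<bar> + b) \<ge> m" by simp
  ultimately have fK: "f (p K) = p K" using fx by simp
  have iK: "i \<le> K" unfolding K_def by simp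
  have f0: "f (p 0) = p 0" using fx p(2) by simp
  have "p i = f (p i)"
  proof (rule geodesic_between_unique[where X="p 0" and Y="p K" and Z="p i" and Z'="f (p i)" and n=K and i=i])
    show "p 0 \<in> V" "p K \<in> V" "p i \<in> V" "f (p i) \<in> V" using pV BT_aut_vertex[OF fa pV] by auto
    show "vdist (p 0) (p K) = K" using pD by simp
    show "vdist (p 0) (p i) = i" using pD by simp
    show "vdist (p i) (p K) = K - i" using pD iK by simp
    show "vdist (p 0) (f (p i)) = i" using BT_aut_vdist[OF fa pV pV, of 0 i] f0 pD by simp
    show "vdist (f (p i)) (p K) = K - i" using BT_aut_vdist[OF fa pV pV, of i K] fK pD iK by simp
    show "i \<le> K" using iK .
  qed
  thus ?thesis by simp
qed

definition ray_fixer :: "nat \<Rightarrow> (int \<Rightarrow> ('a \<times> 'a) set set) \<Rightarrow> int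
    \<Rightarrow> (('a \<times> 'a) set set \<Rightarrow> ('a \<times> 'a) set set) set" where
  "ray_fixer e x m = {f \<in> G_hat v e. \<forall>j\<ge>m. f (x j) = x j}"

lemma ray_from_path_vertex:
  assumes xV: "\<forall>i. x i \<in> V" and xD: "\<forall>i j. vdist (x i) (x j) = nat \<bar>i - j\<bar>"
  shows "BT_ray v (\<lambda>i. x (m + int i))" "ray_equiv (\<lambda>i. x (m + int i)) (pos_ray x)"
proof -
  show "BT_ray v (\<lambda>i. x (m + int i))"
    unfolding BT_ray_def using xV xD BT_dist_eq_vdist by simp
  show "ray_equiv (\<lambda>i. x (m + int i)) (pos_ray x)"
    unfolding ray_equiv_def pos_ray_def
  proof (cases "0 \<le> m")
    case True
    hence "\<forall>n. x (m + int (n + 0)) = x (int (n + nat m))" by (simp add: add.commute)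
    thus "\<exists>a b. \<forall>n. x (m + int (n + a)) = x (int (n + b))" by blast
  next
    case False
    hence "\<forall>n. x (m + int (n + nat (- m))) = x (int (n + 0))" by simp
    thus "\<exists>a b. \<forall>n. x (m + int (n + a)) = x (int (n + b))" by blast
  qed
qed

lemma N_hat_k_eq_ray_fixer:
  assumes xV: "\<forall>i. x i \<in> V" and xD: "\<forall>i j. vdist (x i) (x j) = nat \<bar>i - j\<bar>"
  shows "N_hat_k v e x m = ray_fixer e x m"
proof (intro set_eqI iffI)
  fix f assume fN: "f \<in> N_hat_k v e x m"
  hence fx: "\<forall>i. f (x (m + int i)) = x (m + int i)"
    using ray_from_path_vertex[OF xV xD, of m] unfolding N_hat_k_def by auto
  have "f (x j) = x j" if "j \<ge> m" for j using fx[rule_format, of "nat (j - m)"] that by simp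
  moreover have "f \<in> G_hat v e" using fN unfolding N_hat_k_def N_hat_def B_hat_def by blast
  ultimately show "f \<in> ray_fixer e x m" unfolding ray_fixer_def by blast
next
  fix f assume "f \<in> ray_fixer e x m"
  hence fG: "f \<in> G_hat v e" and fx: "\<forall>j\<ge>m. f (x j) = x j" unfolding ray_fixer_def by blast+
  have "\<forall>n. (f \<circ> pos_ray x) (n + nat \<bar>m\<bar>) = pos_ray x (n + nat \<bar>m\<bar>)"
    unfolding pos_ray_def using fx by simp
  hence "f \<in> B_hat v e x" unfolding B_hat_def ray_equiv_def using fG by blast
  hence "f \<in> N_hat v e x" unfolding N_hat_def using fx by blast
  thus "f \<in> N_hat_k v e x m" unfolding N_hat_k_def using fixes_ray_from[OF xV fG fx] by blast
qed

lemma ray_fixer_comp: "h1 \<in> ray_fixer e x m \<Longrightarrow> h2 \<in> ray_fixer e x m \<Longrightarrow> h1 \<circ> h2 \<in> ray_fixer e x m"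
  unfolding ray_fixer_def using G_hat_comp by auto

lemma ray_fixer_aut_inv: assumes "h \<in> ray_fixer e x m" shows "aut_inv h \<in> ray_fixer e x m"
proof -
  have h: "h \<in> G_hat v e" "\<forall>j\<ge>m. h (x j) = x j" using assms unfolding ray_fixer_def by blast+
  have "\<forall>j\<ge>m. aut_inv h (x j) = x j" using h(2) aut_inv_left[OF G_hat_BT_aut[OF h(1)]] by metis
  thus ?thesis unfolding ray_fixer_def using G_hat_aut_inv[OF h(1)] by blast
qed

lemma ray_fixer_id: "id \<in> ray_fixer e x m" unfolding ray_fixer_def using G_hat_id by simp

lemma ray_fixer_coset_eq:
  assumes h: "h \<in> ray_fixer e x m"
  shows "(\<lambda>f. (g \<circ> h) \<circ> f) ` ray_fixer e x m = (\<lambda>f. g \<circ> f) ` ray_fixer e x m"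
proof (intro set_eqI iffI)
  fix z assume "z \<in> (\<lambda>f. (g \<circ> h) \<circ> f) ` ray_fixer e x m"
  then obtain f where "f \<in> ray_fixer e x m" "z = g \<circ> (h \<circ> f)" by (auto simp: comp_assoc)
  thus "z \<in> (\<lambda>f. g \<circ> f) ` ray_fixer e x m" using ray_fixer_comp[OF h] by blast
next
  fix z assume "z \<in> (\<lambda>f. g \<circ> f) ` ray_fixer e x m"
  then obtain f where f: "f \<in> ray_fixer e x m" "z = g \<circ> f" by blast
  have hG: "h \<in> G_hat v e" using h unfolding ray_fixer_def by blast
  have "h \<circ> (aut_inv h \<circ> f) = f" using aut_inv_right[OF G_hat_BT_aut[OF hG]] by (simp add: comp_def)
  hence "z = (g \<circ> h) \<circ> (aut_inv h \<circ> f)" using f(2) by (simp add: comp_assoc)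
  moreover have "aut_inv h \<circ> f \<in> ray_fixer e x m" using ray_fixer_comp[OF ray_fixer_aut_inv[OF h] f(1)] .
  ultimately show "z \<in> (\<lambda>f. (g \<circ> h) \<circ> f) ` ray_fixer e x m" by blast
qed

lemma coset_eq_iff:
  assumes g: "g \<in> ray_fixer e x k" and g': "g' \<in> ray_fixer e x k"
  shows "(\<lambda>h. g \<circ> h) ` ray_fixer e x (k - 1) = (\<lambda>h. g' \<circ> h) ` ray_fixer e x (k - 1)
    \<longleftrightarrow> g (x (k - 1)) = g' (x (k - 1))"
proof
  let ?K = "ray_fixer e x (k - 1)"
  assume eq: "(\<lambda>h. g \<circ> h) ` ?K = (\<lambda>h. g' \<circ> h) ` ?K"
  have "g' \<circ> id \<in> (\<lambda>h. g' \<circ> h) ` ?K" using ray_fixer_id by blast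
  then obtain h where h: "h \<in> ?K" "g' = g \<circ> h" using eq by auto
  thus "g (x (k - 1)) = g' (x (k - 1))" unfolding ray_fixer_def by auto
next
  let ?K = "ray_fixer e x (k - 1)"
  assume eq: "g (x (k - 1)) = g' (x (k - 1))"
  have gG: "g \<in> G_hat v e" "\<forall>j\<ge>k. g (x j) = x j" using g unfolding ray_fixer_def by blast+
  have gG': "g' \<in> G_hat v e" "\<forall>j\<ge>k. g' (x j) = x j" using g' unfolding ray_fixer_def by blast+
  have ga': "BT_aut v g'" using G_hat_BT_aut[OF gG'(1)] .
  define h where "h = aut_inv g' \<circ> g"
  have "h (x j) = x j" if "j \<ge> k - 1" for j
  proof (cases "j = k - 1")
    case True thus ?thesis unfolding h_def using eq aut_inv_left[OF ga'] by simp
  next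
    case False
    hence "g (x j) = x j" "g' (x j) = x j" using that gG(2) gG'(2) by auto
    thus ?thesis unfolding h_def using aut_inv_left[OF ga', of "x j"] by simp
  qed
  hence "h \<in> ?K" unfolding ray_fixer_def h_def using G_hat_comp[OF G_hat_aut_inv[OF gG'(1)] gG(1)] by blast
  moreover have "g = g' \<circ> h" unfolding h_def using aut_inv_right[OF ga'] by (simp add: comp_def)
  ultimately show "(\<lambda>h. g \<circ> h) ` ?K = (\<lambda>h. g' \<circ> h) ` ?K" using ray_fixer_coset_eq by blast
qed

lemma coset_index_ray_fixer:
  "coset_index (ray_fixer e x k) (ray_fixer e x (k - 1)) = card ((\<lambda>g. g (x (k - 1))) ` ray_fixer e x k)"
  unfolding coset_index_def
proof (rule card_image_eq_if_same_fibres, intro ballI)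
  fix g g' assume "g \<in> ray_fixer e x k" "g' \<in> ray_fixer e x k"
  thus "((\<lambda>h. g \<circ> h) ` ray_fixer e x (k - 1) = (\<lambda>h. g' \<circ> h) ` ray_fixer e x (k - 1))
    = (g (x (k - 1)) = g' (x (k - 1)))" by (rule coset_eq_iff)
qed

lemma branches_eq_branch_vertices:
  assumes "det2 u e2 \<noteq> 0"
  shows "{Y. BT_adj v (hclass v (lat u e2)) Y \<and> Y \<noteq> hclass v (lat u (smul unif e2))}
    = branch_vertex u e2 ` {a. integral a}"
proof (intro set_eqI iffI)
  fix Y assume "Y \<in> {Y. BT_adj v (hclass v (lat u e2)) Y \<and> Y \<noteq> hclass v (lat u (smul unif e2))}"
  thus "Y \<in> branch_vertex u e2 ` {a. integral a}" using adj_eq_branch_vertex[OF assms] by blast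
next
  fix Y assume "Y \<in> branch_vertex u e2 ` {a. integral a}"
  then obtain a where "integral a" "Y = branch_vertex u e2 a" by blast
  thus "Y \<in> {Y. BT_adj v (hclass v (lat u e2)) Y \<and> Y \<noteq> hclass v (lat u (smul unif e2))}"
    using adj_branch_vertex[OF _ assms] branch_vertex_ne_unif[OF _ assms] by simp
qed

lemma card_branch_vertices:
  assumes "det2 u e2 \<noteq> 0"
  shows "card (branch_vertex u e2 ` {a. integral a}) = card (residue_classes v)"
proof -
  define res where "res a = {y \<in> val_ring v. y - a \<in> max_ideal v}" for a
  have vr: "val_ring v = {a. integral a}" unfolding val_ring_def val_ge_def by simp
  have mi: "z \<in> max_ideal v \<longleftrightarrow> val_ge 1 z" for z unfolding max_ideal_def val_ge_def by auto
  have res_eq: "res a = res b \<longleftrightarrow> val_ge 1 (a - b)" if "integral a" "integral b" for a b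
  proof
    assume "res a = res b"
    moreover have "a \<in> res a" unfolding res_def using that mi vr by simp
    ultimately show "val_ge 1 (a - b)" unfolding res_def using mi by auto
  next
    assume h: "val_ge 1 (a - b)"
    have "val_ge 1 (y - a) \<longleftrightarrow> val_ge 1 (y - b)" for y
      using val_ge_add[OF _ h, of "y - a"] val_ge_diff[OF _ h, of "y - b"] by auto
    thus "res a = res b" unfolding res_def using mi by simp
  qed
  have "card (branch_vertex u e2 ` {a. integral a}) = card (res ` {a. integral a})"
    using branch_vertex_eq_iff[OF _ _ assms] res_eq by (intro card_image_eq_if_same_fibres) simp
  also have "res ` {a. integral a} = residue_classes v" unfolding residue_classes_def res_def vr ..
  finally show ?thesis .
qed

text \<open>The transvections fixing $u$ fix the ray and act transitively on these neighbours.\<close>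
lemma orbit_ray_fixer:
  assumes xV: "\<forall>i. x i \<in> V" and xD: "\<forall>i j. vdist (x i) (x j) = nat \<bar>i - j\<bar>"
    and ue: "det2 u e2 \<noteq> 0" "\<And>n. x (k + int n) = hclass v (lat u (smul (unif ^ n) e2))"
  shows "(\<lambda>g. g (x (k - 1))) ` ray_fixer e x k = branch_vertex u e2 ` {a. integral a}"
proof -
  let ?S = "{Y. BT_adj v (x k) Y \<and> Y \<noteq> x (k + 1)}"
  have S: "?S = branch_vertex u e2 ` {a. integral a}"
    using branches_eq_branch_vertices[OF ue(1)] ue(2)[of 0] ue(2)[of 1] by simp
  have xk1: "x (k - 1) \<noteq> x (k + 1)"
  proof
    assume "x (k - 1) = x (k + 1)"
    moreover have "vdist (x (k - 1)) (x (k + 1)) = 2" using xD by simp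
    ultimately show False using vdist_refl xV by simp
  qed
  have "x (k - 1) \<in> ?S" using xD xV adj_iff_vdist xk1 by simp
  then obtain a0 where a0: "integral a0" "x (k - 1) = branch_vertex u e2 a0" using S by auto
  have fix_ray: "x j = hclass v (lat u (smul (unif ^ nat (j - k)) e2))" if "j \<ge> k" for j
    using ue(2)[of "nat (j - k)"] that by simp
  have "g (x (k - 1)) \<in> ?S" if g: "g \<in> ray_fixer e x k" for g
  proof -
    have gG: "BT_aut v g" "\<forall>j\<ge>k. g (x j) = x j"
      using g G_hat_BT_aut unfolding ray_fixer_def by blast+
    have "g (x (k - 1)) \<noteq> g (x (k + 1))"
      using BT_aut_inj[OF gG(1) xV[rule_format] xV[rule_format]] xk1 by blast
    moreover have "g (x (k + 1)) = x (k + 1)" "g (x k) = x k" using gG(2) by simp_all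
    moreover have "vdist (g (x k)) (g (x (k - 1))) = 1"
      using BT_aut_vdist[OF gG(1) xV[rule_format] xV[rule_format]] xD by simp
    moreover have "g (x (k - 1)) \<in> V" using BT_aut_vertex[OF gG(1)] xV by blast
    ultimately show ?thesis using adj_iff_vdist xV by simp
  qed
  hence "(\<lambda>g. g (x (k - 1))) ` ray_fixer e x k \<subseteq> branch_vertex u e2 ` {a. integral a}"
    using S by blast
  moreover have "branch_vertex u e2 a \<in> (\<lambda>g. g (x (k - 1))) ` ray_fixer e x k" if a: "integral a" for a
  proof (rule image_eqI)
    have t: "integral (a - a0)" using val_ge_diff[OF a a0(1)] .
    show "transvection_aut u e2 (a - a0) \<in> ray_fixer e x k"
      unfolding ray_fixer_def using transvection_aut_G_hat fix_ray transvection_aut_fixes_ray[OF ue(1) t] by simp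
    show "branch_vertex u e2 a = transvection_aut u e2 (a - a0) (x (k - 1))"
      using a0(2) transvection_aut_branch_vertex[OF ue(1)] by simp
  qed
  ultimately show ?thesis by blast
qed

lemma biinf_path_vdist:
  assumes "BT_biinf_path v x"
  shows "\<forall>i. x i \<in> V" "\<forall>i j. vdist (x i) (x j) = nat \<bar>i - j\<bar>"
  using assms BT_dist_eq_vdist unfolding BT_biinf_path_def by metis+

end

lemma nonarch_local_field_discrete_valuation:
  "nonarch_local_field v q \<Longrightarrow> discrete_valuation v"
  unfolding nonarch_local_field_def by unfold_locales blast+

theorem mainTheorem15:
  fixes v :: "'a::field \<Rightarrow> int" and q :: nat and e :: nat
    and x :: "int \<Rightarrow> ('a \<times> 'a) set set" and k :: int
  assumes "nonarch_local_field v q"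
    and "1 \<le> e"
    and "BT_biinf_path v x"
  shows "N_hat_k v e x (k - 1) \<subseteq> N_hat_k v e x k \<and>
         coset_index (N_hat_k v e x k) (N_hat_k v e x (k - 1)) = q"
proof -
  interpret discrete_valuation v using assms(1) by (rule nonarch_local_field_discrete_valuation)
  note x = biinf_path_vdist[OF assms(3)]
  have N: "N_hat_k v e x m = ray_fixer e x m" for m using N_hat_k_eq_ray_fixer[OF x] .
  obtain u e2 where ue: "det2 u e2 \<noteq> 0" "\<And>n. x (k + int n) = hclass v (lat u (smul (unif ^ n) e2))"
    using ray_standard_form[of "\<lambda>n. x (k + int n)"] assms(1) x
    unfolding nonarch_local_field_def by auto
  have "coset_index (N_hat_k v e x k) (N_hat_k v e x (k - 1))
      = card ((\<lambda>g. g (x (k - 1))) ` ray_fixer e x k)" using N coset_index_ray_fixer by simp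
  also have "\<dots> = card (branch_vertex u e2 ` {a. integral a})" using orbit_ray_fixer[OF x ue] by simp
  also have "\<dots> = q" using card_branch_vertices[OF ue(1)] assms(1) unfolding nonarch_local_field_def by simp
  finally show ?thesis using N unfolding ray_fixer_def by auto
qed

end
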